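(* Any reflection operator $R_{|\phi\rangle}$, where $|\phi\rangle$ is an $n$-qubit unit vector whose coordinates in the computational basis have the form $((a+b\sqrt{2})+i(c+d\sqrt{2}))/\sqrt{2}^{\kappa}$ with $a,b,c,d$ integers, can be implemented using $O(2^n n\kappa)$ Clifford and T gates and at most one ancilla.
   Context: For a unit vector $|\psi\rangle$, the reflection operator is $R_{|\psi\rangle}=\mathbb{I}-2|\psi\rangle\langle\psi|$. The T gate is $\mathrm{diag}(1,e^{i\pi/4})$; Clifford circuits are generated by CNOT, Hadamard and Phase gates. *)

theory Defs
  imports Complex_Main
begin

text \<open>Quantum states on m qubits are functions nat => complex, of which only the
  indices below 2^m matter. Qubit k of a basis index x is bit k of x.\<close>

datatype gate = Hg nat | Sg nat | Tg nat | CNOTg nat nat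

text \<open>Apply a single-qubit gate u (u out_bit in_bit) to qubit k.\<close>
definition app1 :: "(bool \<Rightarrow> bool \<Rightarrow> complex) \<Rightarrow> nat \<Rightarrow> (nat \<Rightarrow> complex) \<Rightarrow> (nat \<Rightarrow> complex)" where
  "app1 u k v = (\<lambda>x. u (bit x k) (bit x k) * v x + u (bit x k) (\<not> bit x k) * v (flip_bit k x))"

definition hadamard :: "bool \<Rightarrow> bool \<Rightarrow> complex" where
  "hadamard r c = (if r \<and> c then -1 else 1) / complex_of_real (sqrt 2)"

definition phase_gate :: "bool \<Rightarrow> bool \<Rightarrow> complex" where
  "phase_gate r c = (if r = c then (if r then \<i> else 1) else 0)"

definition t_gate :: "bool \<Rightarrow> bool \<Rightarrow> complex" where
  "t_gate r c = (if r = c then (if r then cis (pi / 4) else 1) else 0)"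

fun apply_gate :: "gate \<Rightarrow> (nat \<Rightarrow> complex) \<Rightarrow> (nat \<Rightarrow> complex)" where
  "apply_gate (Hg k) v = app1 hadamard k v"
| "apply_gate (Sg k) v = app1 phase_gate k v"
| "apply_gate (Tg k) v = app1 t_gate k v"
| "apply_gate (CNOTg c t) v = (\<lambda>x. v (if bit x c then flip_bit t x else x))"

fun run :: "gate list \<Rightarrow> (nat \<Rightarrow> complex) \<Rightarrow> (nat \<Rightarrow> complex)" where
  "run [] v = v"
| "run (g # gs) v = run gs (apply_gate g v)"

fun gate_ok :: "nat \<Rightarrow> gate \<Rightarrow> bool" where
  "gate_ok m (Hg k) = (k < m)"
| "gate_ok m (Sg k) = (k < m)"
| "gate_ok m (Tg k) = (k < m)"
| "gate_ok m (CNOTg c t) = (c < m \<and> t < m \<and> c \<noteq> t)"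

definition circuit_on :: "nat \<Rightarrow> gate list \<Rightarrow> bool" where
  "circuit_on m gs = (\<forall>g \<in> set gs. gate_ok m g)"

definition inner :: "nat \<Rightarrow> (nat \<Rightarrow> complex) \<Rightarrow> (nat \<Rightarrow> complex) \<Rightarrow> complex" where
  "inner n u v = (\<Sum>y<2^n. cnj (u y) * v y)"

definition unit_state :: "nat \<Rightarrow> (nat \<Rightarrow> complex) \<Rightarrow> bool" where
  "unit_state n phi = ((\<Sum>y<2^n. (cmod (phi y))^2) = 1)"

definition reflection :: "nat \<Rightarrow> (nat \<Rightarrow> complex) \<Rightarrow> (nat \<Rightarrow> complex) \<Rightarrow> (nat \<Rightarrow> complex)" where
  "reflection n phi v = (\<lambda>x. v x - 2 * phi x * inner n phi v)"

definition coords_form :: "nat \<Rightarrow> nat \<Rightarrow> (nat \<Rightarrow> complex) \<Rightarrow> bool" where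
  "coords_form n \<kappa> phi = (\<forall>x<2^n. \<exists>a b c d :: int.
      phi x = Complex (of_int a + of_int b * sqrt 2) (of_int c + of_int d * sqrt 2)
              / complex_of_real (sqrt 2 ^ \<kappa>))"

text \<open>Embed an n-qubit state as (state tensor |0>) on n+1 qubits, ancilla = qubit n.\<close>
definition with_ancilla :: "nat \<Rightarrow> (nat \<Rightarrow> complex) \<Rightarrow> (nat \<Rightarrow> complex)" where
  "with_ancilla n v = (\<lambda>x. if x < 2^n then v x else 0)"

text \<open>The circuit gs on n+1 qubits implements the n-qubit operator U using one clean
  ancilla (initialised to |0> and returned to |0>).\<close>
definition implements_with_ancilla :: "nat \<Rightarrow> gate list \<Rightarrow> ((nat \<Rightarrow> complex) \<Rightarrow> (nat \<Rightarrow> complex)) \<Rightarrow> bool" where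
  "implements_with_ancilla n gs U =
     (circuit_on (n + 1) gs \<and>
      (\<forall>v x. x < 2^(n+1) \<longrightarrow> run gs (with_ancilla n v) x = with_ancilla n (U v) x))"

end

theory Submission
  imports Defs
begin

text \<open>
  Write \<open>\<phi> = z / \<surd>2\<^sup>\<kappa>\<close> with \<open>z\<close> a vector over \<open>\<int>[\<omega>]\<close>, \<open>\<omega> = e\<^sup>i\<^sup>\<pi>\<^sup>/\<^sup>4\<close>. Since
  \<open>|z\<^sub>i|\<^sup>2 = a\<^sub>i + b\<^sub>i\<surd>2\<close> with \<open>\<Sigma> a\<^sub>i = 2\<^sup>\<kappa>\<close> and \<open>\<Sigma> b\<^sub>i = 0\<close>, the entries with odd \<open>a\<^sub>i\<close>, and
  then those with odd \<open>b\<^sub>i\<close>, come in pairs; after a phase \<open>\<omega>\<^sup>l\<close>, a Hadamard on such a pair of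
  basis states makes both entries divisible by \<open>\<surd>2\<close>. So \<open>O(2\<^sup>n)\<close> two-level operators lower
  \<open>\<kappa>\<close> by one, and a product \<open>W\<close> of \<open>O(2\<^sup>n \<kappa>)\<close> of them maps \<open>\<phi>\<close> to a unit multiple of a
  basis state \<open>e\<^sub>x\<^sub>0\<close>. Then \<open>R\<^sub>\<phi> = W\<^sup>-\<^sup>1 Z W\<close> for the two-level \<open>Z\<close> negating \<open>e\<^sub>x\<^sub>0\<close>.
  Each two-level operator costs \<open>O(n)\<close> Clifford+T gates: a basis permutation built from CNOTs,
  NOTs and a multiply controlled NOT onto the ancilla (Toffoli chains on borrowed qubits)
  reduces it to a singly controlled gate.
\<close>

section \<open>Clifford+T circuits\<close>

lemma run_append [simp]: "run (gs @ hs) v = run hs (run gs v)"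
  by (induction gs arbitrary: v) auto

lemma bit_flip_bit_nat [simp]:
  "bit (flip_bit k (x::nat)) q = (if q = k then \<not> bit x q else bit x q)"
  by (auto simp: bit_flip_bit_iff)

lemma flip_bit_flip_bit [simp]: "flip_bit k (flip_bit k (x::nat)) = x"
  by (rule bit_eqI) simp

lemma flip_bit_commute: "flip_bit a (flip_bit b (x::nat)) = flip_bit b (flip_bit a x)"
  by (rule bit_eqI) auto

lemma less_power2_iff_bits: "(x::nat) < 2^n \<longleftrightarrow> (\<forall>q\<ge>n. \<not> bit x q)"
proof
  assume "x < 2^n"
  hence "take_bit n x = x" by (simp add: take_bit_nat_eq_self_iff)
  thus "\<forall>q\<ge>n. \<not> bit x q" by (metis bit_take_bit_iff not_le)
next
  assume "\<forall>q\<ge>n. \<not> bit x q"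
  hence "take_bit n x = x" by (intro bit_eqI) (auto simp: bit_take_bit_iff not_le)
  thus "x < 2^n" by (metis take_bit_nat_less_exp)
qed

lemma eq_if_low_bits_eq:
  "(x::nat) < 2^n \<Longrightarrow> y < 2^n \<Longrightarrow> (\<forall>q<n. bit x q = bit y q) \<Longrightarrow> x = y"
  by (rule bit_eqI) (metis less_power2_iff_bits not_le)

lemma bit_fold_flip_bit:
  "distinct ks \<Longrightarrow> bit (fold flip_bit ks (i::nat)) q = (bit i q \<noteq> (q \<in> set ks))"
  by (induction ks arbitrary: i) auto

type_synonym qmat = "bool \<Rightarrow> bool \<Rightarrow> complex"

definition ctrl_app :: "(nat \<Rightarrow> bool) \<Rightarrow> qmat \<Rightarrow> qmat \<Rightarrow> nat \<Rightarrow> (nat \<Rightarrow> complex) \<Rightarrow> nat \<Rightarrow> complex" where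
  "ctrl_app P A B k v = (\<lambda>x. (if P x then B else A) (bit x k) (bit x k) * v x
        + (if P x then B else A) (bit x k) (\<not> bit x k) * v (flip_bit k x))"

definition qmult :: "qmat \<Rightarrow> qmat \<Rightarrow> qmat" where
  "qmult A B = (\<lambda>r c. A r False * B False c + A r True * B True c)"

definition qI :: qmat where "qI r c = (if r = c then 1 else 0)"
definition qX :: qmat where "qX r c = (if r = c then 0 else 1)"
definition qdiag :: "complex \<Rightarrow> complex \<Rightarrow> qmat" where
  "qdiag a b r c = (if r = c then (if r then b else a) else 0)"

lemma ctrl_app_ctrl_app:
  assumes "\<And>x. P (flip_bit k x) = P x"
  shows "ctrl_app P A1 B1 k (ctrl_app P A0 B0 k v) = ctrl_app P (qmult A1 A0) (qmult B1 B0) k v"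
proof
  fix x
  show "ctrl_app P A1 B1 k (ctrl_app P A0 B0 k v) x = ctrl_app P (qmult A1 A0) (qmult B1 B0) k v x"
    using assms[of x]
    by (cases "P x"; cases "bit x k") (simp_all add: ctrl_app_def qmult_def algebra_simps)
qed

lemma app1_eq_ctrl_app: "app1 u k v = ctrl_app P u u k v"
  by (simp add: app1_def ctrl_app_def)

lemma ctrl_app_qI_qX: "ctrl_app P qI qX t v = (\<lambda>x. v (if P x then flip_bit t x else x))"
  by (auto simp: ctrl_app_def qI_def qX_def fun_eq_iff)

lemma ctrl_app_qdiag:
  "ctrl_app P (qdiag a0 a1) (qdiag b0 b1) t v =
     (\<lambda>x. (if P x then (if bit x t then b1 else b0) else (if bit x t then a1 else a0)) * v x)"
  by (auto simp: ctrl_app_def qdiag_def fun_eq_iff)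

lemma qmult_assoc: "qmult (qmult A B) C = qmult A (qmult B C)"
  by (simp add: qmult_def fun_eq_iff algebra_simps)

lemma qmult_qI [simp]: "qmult qI A = A" "qmult A qI = A"
  by (auto simp: qmult_def qI_def fun_eq_iff)

lemma qmult_qdiag [simp]: "qmult (qdiag a b) (qdiag c d) = qdiag (a*c) (b*d)"
  by (auto simp: qmult_def qdiag_def fun_eq_iff)

lemma qI_eq_qdiag: "qI = qdiag 1 1"
  by (auto simp: qI_def qdiag_def fun_eq_iff)

lemma qmult_qX_qX: "qmult qX qX = qI"
  by (auto simp: qmult_def qX_def qI_def fun_eq_iff)

definition \<omega> :: complex where "\<omega> = cis (pi/4)"
definition rt2 :: complex where "rt2 = complex_of_real (sqrt 2)"

lemma rt2_mult_rt2: "rt2 * rt2 = 2"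
  by (simp add: rt2_def flip: of_real_mult)

lemma rt2_nonzero [simp]: "rt2 \<noteq> 0"
  by (simp add: rt2_def)

lemma omega_eq: "\<omega> = (1 + \<i>) / rt2"
proof -
  have "cis (pi/4) = Complex (sqrt 2 / 2) (sqrt 2 / 2)" by (simp add: cis.ctr cos_45 sin_45)
  also have "\<dots> = (1 + \<i>) / rt2"
    by (simp add: rt2_def complex_eq_iff Re_divide Im_divide power2_eq_square real_div_sqrt)
  finally show ?thesis by (simp add: \<omega>_def)
qed

lemma omega_pow8: "\<omega>^8 = 1" by (simp add: \<omega>_def DeMoivre)
lemma omega_pow4: "\<omega>^4 = -1" by (simp add: \<omega>_def DeMoivre)

lemma omega_mult_pow7: "\<omega> * \<omega>^7 = 1" "\<omega>^7 * \<omega> = 1"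
  using omega_pow8 power_add[of \<omega> 1 7] by (simp_all add: mult.commute)

lemma omega_pow7: "\<omega>^7 = (1 - \<i>) / rt2"
proof -
  have "(1 + \<i>) * (1 - \<i>) = 2" by (simp add: algebra_simps)
  hence "\<omega> * ((1 - \<i>) / rt2) = 1"
    unfolding omega_eq using rt2_mult_rt2 by (simp add: divide_simps)
  thus ?thesis using omega_mult_pow7(1) by (metis mult.left_commute mult.right_neutral mult.commute)
qed

lemma t_gate_eq: "t_gate = qdiag 1 \<omega>"
  by (auto simp: t_gate_def qdiag_def \<omega>_def fun_eq_iff)

lemma phase_gate_eq: "phase_gate = qdiag 1 \<i>"
  by (auto simp: phase_gate_def qdiag_def fun_eq_iff)

lemma hadamard_eq: "hadamard r c = (if r \<and> c then -1 else 1) / rt2"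
  by (simp add: hadamard_def rt2_def)

lemma hadamard_squared: "qmult hadamard hadamard = qI"
  by (auto simp: fun_eq_iff qmult_def qI_def hadamard_eq field_simps rt2_mult_rt2)

lemma hadamard_Z_hadamard: "qmult hadamard (qmult (qdiag 1 (-1)) hadamard) = qX"
  by (auto simp: fun_eq_iff qmult_def qdiag_def hadamard_eq qX_def field_simps rt2_mult_rt2)

lemma hadamard_X_hadamard: "qmult hadamard (qmult qX hadamard) = qdiag 1 (-1)"
  by (auto simp: fun_eq_iff qmult_def qdiag_def hadamard_eq qX_def field_simps rt2_mult_rt2)

lemma hadamard_S_S_hadamard: "qmult hadamard (qmult phase_gate (qmult phase_gate hadamard)) = qX"
  by (auto simp: fun_eq_iff qmult_def phase_gate_def hadamard_eq qX_def field_simps rt2_mult_rt2)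

text \<open>The Clifford+T decomposition of \<open>H\<close> underlying the controlled Hadamard: the middle \<open>X\<close>
  becomes the controlled \<open>X\<close>, and the rest cancels when the control is off.\<close>
lemma hadamard_decomposition:
  "qmult (qdiag 1 \<i>) (qmult hadamard (qmult (qdiag 1 \<omega>) (qmult qX (qmult (qdiag 1 (\<omega>^7))
     (qmult hadamard (qdiag 1 (- \<i>))))))) = hadamard"
  unfolding omega_pow7 unfolding omega_eq
  by (simp add: fun_eq_iff qmult_def qdiag_def hadamard_eq qX_def)
     (auto simp: field_simps rt2_mult_rt2)

definition diag_op :: "(nat \<Rightarrow> complex) \<Rightarrow> (nat \<Rightarrow> complex) \<Rightarrow> nat \<Rightarrow> complex" where
  "diag_op f v = (\<lambda>x. f x * v x)"

lemma run_T: "run [Tg q] v = diag_op (\<lambda>x. \<omega> ^ (if bit x q then 1 else 0)) v"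
  by (auto simp: diag_op_def app1_def t_gate_def \<omega>_def)

lemma run_replicate_T:
  "run (replicate k (Tg q)) v = diag_op (\<lambda>x. \<omega> ^ (if bit x q then k else 0)) v"
proof (induction k arbitrary: v)
  case 0 then show ?case by (simp add: diag_op_def)
next
  case (Suc k)
  have "run (replicate (Suc k) (Tg q)) v = run (replicate k (Tg q)) (run [Tg q] v)" by simp
  also have "\<dots> = diag_op (\<lambda>x. \<omega> ^ (if bit x q then Suc k else 0)) v"
    unfolding Suc run_T by (auto simp: diag_op_def fun_eq_iff)
  finally show ?case .
qed

lemma run_diag_op_append:
  assumes "\<And>v. run gs v = diag_op f v" "\<And>v. run hs v = diag_op g v"
  shows "run (gs @ hs) v = diag_op (\<lambda>x. f x * g x) v"
  using assms by (simp add: diag_op_def fun_eq_iff mult.commute mult.left_commute)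

definition cnot_map :: "nat \<Rightarrow> nat \<Rightarrow> nat \<Rightarrow> nat" where
  "cnot_map c t x = (if bit x c then flip_bit t x else x)"

lemma run_CNOT: "run [CNOTg c t] v = (\<lambda>x. v (cnot_map c t x))"
  by (simp add: cnot_map_def)

lemma cnot_map_involutive: "c \<noteq> t \<Longrightarrow> cnot_map c t (cnot_map c t x) = x"
  by (simp add: cnot_map_def)

lemma bit_cnot_map:
  "c \<noteq> t \<Longrightarrow> bit (cnot_map c t x) q = (if q = t then bit x q \<noteq> bit x c else bit x q)"
  by (auto simp: cnot_map_def)

definition cnot_conj :: "nat \<Rightarrow> nat \<Rightarrow> gate list \<Rightarrow> gate list" where
  "cnot_conj c t gs = CNOTg c t # gs @ [CNOTg c t]"

lemma run_cnot_conj: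
  assumes "c \<noteq> t" "\<And>v. run gs v = diag_op f v"
  shows "run (cnot_conj c t gs) v = diag_op (\<lambda>x. f (cnot_map c t x)) v"
  using assms by (simp add: cnot_conj_def diag_op_def run_CNOT cnot_map_involutive del: run.simps(2))
    (auto simp: cnot_map_def fun_eq_iff)

abbreviation T_dagger :: "nat \<Rightarrow> gate list" where "T_dagger q \<equiv> replicate 7 (Tg q)"

text \<open>The phase polynomial \<open>4abc = a + b + c - (a \<oplus> b) - (b \<oplus> c) - (a \<oplus> c) + (a \<oplus> b \<oplus> c)\<close>,
  read modulo 8 in the exponent of \<open>\<omega>\<close>.\<close>
definition ccz_circ :: "nat \<Rightarrow> nat \<Rightarrow> nat \<Rightarrow> gate list" where
  "ccz_circ a b c = [Tg a, Tg b, Tg c] @ cnot_conj a b (T_dagger b) @ cnot_conj b c (T_dagger c)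
     @ cnot_conj a c (T_dagger c) @ cnot_conj a c (cnot_conj b c [Tg c])"

lemma run_ccz_circ:
  assumes "a \<noteq> b" "b \<noteq> c" "a \<noteq> c"
  shows "run (ccz_circ a b c) v = diag_op (\<lambda>x. if bit x a \<and> bit x b \<and> bit x c then -1 else 1) v"
proof -
  have T3: "run [Tg a, Tg b, Tg c] v = diag_op (\<lambda>x. \<omega> ^ (if bit x a then 1 else 0)
      * \<omega> ^ (if bit x b then 1 else 0) * \<omega> ^ (if bit x c then 1 else 0)) v" for v
    using run_diag_op_append[OF run_diag_op_append[OF run_T run_T] run_T, of a b c v] by simp
  have "run (ccz_circ a b c) v = diag_op (\<lambda>x. (\<omega> ^ (if bit x a then 1 else 0)
     * \<omega> ^ (if bit x b then 1 else 0) * \<omega> ^ (if bit x c then 1 else 0))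
     * (\<omega> ^ (if bit (cnot_map a b x) b then 7 else 0) * (\<omega> ^ (if bit (cnot_map b c x) c then 7 else 0)
     * (\<omega> ^ (if bit (cnot_map a c x) c then 7 else 0)
     * \<omega> ^ (if bit (cnot_map b c (cnot_map a c x)) c then 1 else 0))))) v"
    unfolding ccz_circ_def
    by (rule run_diag_op_append[OF T3 run_diag_op_append[OF run_cnot_conj[OF _ run_replicate_T]
          run_diag_op_append[OF run_cnot_conj[OF _ run_replicate_T]
          run_diag_op_append[OF run_cnot_conj[OF _ run_replicate_T]
          run_cnot_conj[OF _ run_cnot_conj[OF _ run_T]]]]]])
       (use assms in auto)
  moreover have "\<omega>^16 = 1"
    using omega_pow8 by (metis power_mult_numeral num_double numeral_times_numeral power_one)
  moreover have "\<omega> * (\<omega> * (\<omega> * \<omega>)) = -1"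
    using omega_pow4 by (simp add: power4_eq_xxxx mult.assoc)
  ultimately show ?thesis
    using assms omega_pow4 by (auto simp: diag_op_def fun_eq_iff bit_cnot_map power_add[symmetric])
qed

definition toffoli :: "nat \<Rightarrow> nat \<Rightarrow> nat \<Rightarrow> gate list" where
  "toffoli a b t = Hg t # ccz_circ a b t @ [Hg t]"

definition toffoli_map :: "nat \<Rightarrow> nat \<Rightarrow> nat \<Rightarrow> nat \<Rightarrow> nat" where
  "toffoli_map a b t x = (if bit x a \<and> bit x b then flip_bit t x else x)"

lemma bit_toffoli_map:
  "bit (toffoli_map a b t x) q = (if q = t then bit x q \<noteq> (bit x a \<and> bit x b) else bit x q)"
  by (auto simp: toffoli_map_def)

lemma run_toffoli:
  assumes "a \<noteq> b" "b \<noteq> t" "a \<noteq> t"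
  shows "run (toffoli a b t) v = (\<lambda>x. v (toffoli_map a b t x))"
proof -
  let ?P = "\<lambda>x::nat. bit x a \<and> bit x b"
  have inv: "\<And>x. ?P (flip_bit t x) = ?P x" using assms by simp
  have ccz: "run (ccz_circ a b t) u = ctrl_app ?P (qdiag 1 1) (qdiag 1 (-1)) t u" for u
    unfolding run_ccz_circ[OF assms] ctrl_app_qdiag diag_op_def by (auto simp: fun_eq_iff)
  have "run (toffoli a b t) v
      = ctrl_app ?P hadamard hadamard t (run (ccz_circ a b t) (ctrl_app ?P hadamard hadamard t v))"
    by (simp add: toffoli_def app1_eq_ctrl_app[of _ _ _ ?P])
  also have "\<dots> = ctrl_app ?P qI qX t v"
    unfolding ccz ctrl_app_ctrl_app[of ?P, OF inv] hadamard_Z_hadamard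
    by (simp flip: qI_eq_qdiag add: hadamard_squared)
  finally show ?thesis by (simp add: ctrl_app_qI_qX toffoli_map_def)
qed

definition not_circ :: "nat \<Rightarrow> gate list" where "not_circ q = [Hg q, Sg q, Sg q, Hg q]"

lemma run_not_circ: "run (not_circ q) v = (\<lambda>x. v (flip_bit q x))"
proof -
  let ?P = "\<lambda>x::nat. False"
  have "run (not_circ q) v = ctrl_app ?P hadamard hadamard q (ctrl_app ?P phase_gate phase_gate q
        (ctrl_app ?P phase_gate phase_gate q (ctrl_app ?P hadamard hadamard q v)))"
    by (simp add: not_circ_def app1_eq_ctrl_app[of _ _ _ ?P])
  also have "\<dots> = ctrl_app ?P qX qX q v"
    by (simp add: ctrl_app_ctrl_app[of ?P] hadamard_S_S_hadamard)
  finally show ?thesis by (auto simp: ctrl_app_def qX_def fun_eq_iff)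
qed

subsection \<open>Multiply controlled NOT with borrowed qubits\<close>

definition all_bits :: "nat list \<Rightarrow> nat \<Rightarrow> bool" where
  "all_bits cs x = (\<forall>c\<in>set cs. bit x c)"

lemma all_bits_Cons: "all_bits (c # cs) x = (bit x c \<and> all_bits cs x)"
  by (simp add: all_bits_def)

lemma all_bits_append: "all_bits (xs @ ys) x = (all_bits xs x \<and> all_bits ys x)"
  by (auto simp: all_bits_def)

lemma all_bits_flip_bit: "q \<notin> set cs \<Longrightarrow> all_bits cs (flip_bit q x) = all_bits cs x"
  by (auto simp: all_bits_def)

lemma all_bits_cong: "(\<And>c. c \<in> set cs \<Longrightarrow> bit x c = bit y c) \<Longrightarrow> all_bits cs x = all_bits cs y"
  by (auto simp: all_bits_def)

text \<open>The V-shaped Toffoli chain of Barenco et al.: with controls \<open>c\<^sub>0, c\<^sub>1, \<dots>\<close> and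
  targets \<open>e\<^sub>0, e\<^sub>1, \<dots>\<close> it toggles each \<open>e\<^sub>p\<close> by the conjunction of the controls from
  \<open>c\<^sub>p\<close> on, whatever the initial contents of the targets.\<close>
fun toffoli_chain :: "nat list \<Rightarrow> nat list \<Rightarrow> gate list" where
  "toffoli_chain (c # c' # cs) (e # e' # es) =
     toffoli c e' e @ toffoli_chain (c' # cs) (e' # es) @ toffoli c e' e"
| "toffoli_chain (c # c' # cs) [e] = toffoli c c' e"
| "toffoli_chain _ _ = []"

fun toffoli_chain_map :: "nat list \<Rightarrow> nat list \<Rightarrow> nat \<Rightarrow> nat" where
  "toffoli_chain_map (c # c' # cs) (e # e' # es) x =
     toffoli_map c e' e (toffoli_chain_map (c' # cs) (e' # es) (toffoli_map c e' e x))"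
| "toffoli_chain_map (c # c' # cs) [e] x = toffoli_map c c' e x"
| "toffoli_chain_map _ _ x = x"

lemma run_toffoli_chain:
  "distinct (cs @ es) \<Longrightarrow> run (toffoli_chain cs es) v = (\<lambda>x. v (toffoli_chain_map cs es x))"
  by (induction cs es arbitrary: v rule: toffoli_chain.induct) (auto simp: run_toffoli)

definition chain_toggles :: "nat list \<Rightarrow> nat list \<Rightarrow> nat \<Rightarrow> nat \<Rightarrow> bool" where
  "chain_toggles cs es x q = (\<exists>p<length es. es!p = q \<and> all_bits (drop p cs) x)"

lemma chain_toggles_Cons:
  "chain_toggles (c # cs) (e # es) x q = ((q = e \<and> all_bits (c # cs) x) \<or> chain_toggles cs es x q)"
  unfolding chain_toggles_def by (auto simp: less_Suc_eq_0_disj)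

lemma chain_toggles_cong:
  assumes "\<And>c. c \<in> set cs \<Longrightarrow> bit x c = bit y c"
  shows "chain_toggles cs es x q = chain_toggles cs es y q"
proof -
  have "all_bits (drop p cs) x = all_bits (drop p cs) y" for p
    by (rule all_bits_cong) (use assms in \<open>meson in_set_dropD\<close>)
  thus ?thesis unfolding chain_toggles_def by simp
qed

lemma not_chain_toggles: "q \<notin> set es \<Longrightarrow> \<not> chain_toggles cs es x q"
  by (auto simp: chain_toggles_def dest!: nth_mem)

lemma bit_toffoli_chain_map:
  "distinct (cs @ es) \<Longrightarrow> length cs = Suc (length es) \<Longrightarrow>
   bit (toffoli_chain_map cs es x) q = (bit x q \<noteq> chain_toggles cs es x q)"
proof (induction cs es arbitrary: x q rule: toffoli_chain.induct)
  case (1 c c' cs e e' es)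
  let ?y = "toffoli_map c e' e x"
  let ?z = "toffoli_chain_map (c' # cs) (e' # es) ?y"
  have IH: "bit ?z r = (bit ?y r \<noteq> chain_toggles (c' # cs) (e' # es) ?y r)" for r
    using 1 by simp
  have tc: "chain_toggles (c' # cs) (e' # es) ?y r = chain_toggles (c' # cs) (e' # es) x r" for r
    using 1(2) by (intro chain_toggles_cong) (auto simp: bit_toffoli_map)
  have "c \<notin> set (e' # es)" using 1(2) by auto
  hence zc: "bit ?z c = bit x c"
    using IH[of c] 1(2) tc[of c] not_chain_toggles[of c "e' # es" "c' # cs" x]
    by (auto simp: bit_toffoli_map)
  have "\<not> chain_toggles cs es x e'" using 1(2) by (intro not_chain_toggles) auto
  moreover have "all_bits (c' # cs) ?y = all_bits (c' # cs) x"
    using 1(2) by (intro all_bits_cong) (auto simp: bit_toffoli_map)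
  ultimately have ze': "bit ?z e' = (bit x e' \<noteq> all_bits (c' # cs) x)"
    using IH[of e'] tc[of e'] 1(2) by (auto simp: bit_toffoli_map chain_toggles_Cons)
  have "\<not> chain_toggles (c' # cs) (e' # es) x e" using 1(2) by (intro not_chain_toggles) auto
  hence "bit (toffoli_map c e' e ?z) q = (bit x q \<noteq> chain_toggles (c # c' # cs) (e # e' # es) x q)"
    using IH[of q] tc[of q] IH[of e] tc[of e] zc ze' 1(2)
    by (cases "q = e") (auto simp: bit_toffoli_map chain_toggles_Cons all_bits_Cons)
  then show ?case by simp
next
  case (2 c c' cs e)
  then show ?case by (auto simp: bit_toffoli_map chain_toggles_def all_bits_def)
qed (auto simp: chain_toggles_def)

text \<open>A NOT on \<open>t\<close> controlled by all of \<open>cs\<close>, borrowing \<open>length cs - 2\<close> qubits of \<open>ds\<close>: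
  the second chain undoes the garbage the first one leaves on the borrowed qubits.\<close>
definition mcx_borrowing :: "nat list \<Rightarrow> nat \<Rightarrow> nat list \<Rightarrow> gate list" where
  "mcx_borrowing cs t ds = toffoli_chain cs (t # take (length cs - 2) ds)
     @ toffoli_chain (tl cs) (take (length cs - 2) ds)"

lemma run_mcx_borrowing:
  assumes "2 \<le> length cs" "length cs - 2 \<le> length ds" "distinct (t # cs @ ds)"
  shows "run (mcx_borrowing cs t ds) v = (\<lambda>x. v (if all_bits cs x then flip_bit t x else x))"
proof -
  let ?es = "take (length cs - 2) ds"
  have d1: "distinct (cs @ t # ?es)"
    using assms set_take_subset[of "length cs - 2" ds] distinct_take[of ds "length cs - 2"] by auto
  have d2: "distinct (tl cs @ ?es)" using d1 by (cases cs) auto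
  obtain c cs' where cs: "cs = c # cs'" using assms by (cases cs) auto
  have l1: "length cs = Suc (length (t # ?es))" and l2: "length (tl cs) = Suc (length ?es)"
    using assms by (auto simp: cs)
  have "toffoli_chain_map cs (t # ?es) (toffoli_chain_map (tl cs) ?es x)
      = (if all_bits cs x then flip_bit t x else x)" for x
  proof (rule bit_eqI)
    fix q
    let ?y = "toffoli_chain_map (tl cs) ?es x"
    have hy: "bit ?y r = (bit x r \<noteq> chain_toggles (tl cs) ?es x r)" for r
      using bit_toffoli_chain_map[OF d2 l2] .
    have "\<And>r. r \<in> set cs \<Longrightarrow> bit ?y r = bit x r"
      using hy d1 not_chain_toggles[of _ ?es "tl cs" x] by auto
    hence "chain_toggles cs (t # ?es) ?y q = chain_toggles cs (t # ?es) x q"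
      by (rule chain_toggles_cong)
    moreover have "chain_toggles cs (t # ?es) x q
        = ((q = t \<and> all_bits cs x) \<or> chain_toggles (tl cs) ?es x q)"
      unfolding cs by (simp add: chain_toggles_Cons)
    moreover have "\<not> chain_toggles (tl cs) ?es x t" using d1 by (intro not_chain_toggles) auto
    ultimately show "bit (toffoli_chain_map cs (t # ?es) ?y) q
        = bit (if all_bits cs x then flip_bit t x else x) q"
      using bit_toffoli_chain_map[OF _ l1] d1 hy[of q] by (cases "q = t") auto
  qed
  then show ?thesis using d1 d2 by (simp add: mcx_borrowing_def run_toffoli_chain)
qed

text \<open>With a single borrowed qubit \<open>d\<close>, the controls are split into halves, each half
  borrowing the other half's qubits.\<close>
definition mcx :: "nat list \<Rightarrow> nat \<Rightarrow> nat \<Rightarrow> gate list" where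
  "mcx C a d = (if length C = 0 then not_circ a else if length C = 1 then [CNOTg (hd C) a]
     else if length C \<le> 3 then mcx_borrowing C a [d]
     else (let k = (length C + 1) div 2; A = take k C; B = drop k C;
              L1 = mcx_borrowing A d (B @ [a]); L2 = mcx_borrowing (d # B) a A in L1 @ L2 @ L1 @ L2))"

lemma mcx_cases:
  obtains "length C = 0" | "length C = 1" | "2 \<le> length C" "length C \<le> 3" | "4 \<le> length C"
  by linarith

lemma run_mcx:
  assumes "distinct (a # d # C)"
  shows "run (mcx C a d) v = (\<lambda>x. v (if all_bits C x then flip_bit a x else x))"
proof (cases C rule: mcx_cases)
  case 1 then show ?thesis by (simp add: mcx_def run_not_circ all_bits_def)
next
  case 2
  then obtain c where "C = [c]" by (cases C) auto
  then show ?thesis using assms by (auto simp: mcx_def all_bits_def fun_eq_iff)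
next
  case 3
  then show ?thesis using assms by (auto simp: mcx_def intro: run_mcx_borrowing)
next
  case 4
  define k where "k = (length C + 1) div 2"
  define A where "A = take k C"
  define B where "B = drop k C"
  have C: "C = A @ B" by (simp add: A_def B_def)
  have lA: "length A = k" "length B = length C - k" using 4 by (auto simp: A_def B_def k_def)
  have dist: "distinct (a # d # A @ B)" using assms C by simp
  have r1: "run (mcx_borrowing A d (B @ [a])) u = (\<lambda>x. u (if all_bits A x then flip_bit d x else x))" for u
    by (rule run_mcx_borrowing) (use lA 4 dist k_def in auto)
  have r2: "run (mcx_borrowing (d # B) a A) u
      = (\<lambda>x. u (if all_bits (d # B) x then flip_bit a x else x))" for u
    by (rule run_mcx_borrowing) (use lA 4 dist k_def in auto)
  have "mcx C a d = mcx_borrowing A d (B @ [a]) @ mcx_borrowing (d # B) a A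
      @ mcx_borrowing A d (B @ [a]) @ mcx_borrowing (d # B) a A"
    using 4 by (auto simp: mcx_def Let_def A_def B_def k_def)
  moreover have "a \<notin> set A" "d \<notin> set A" "a \<notin> set B" "d \<notin> set B" "a \<noteq> d" using dist by auto
  ultimately show ?thesis
    by (simp add: r1 r2 fun_eq_iff)
      (auto simp: all_bits_Cons all_bits_flip_bit C all_bits_append flip_bit_commute[of d a])
qed

definition implements_ctrl :: "nat \<Rightarrow> nat \<Rightarrow> gate list \<Rightarrow> qmat \<Rightarrow> qmat \<Rightarrow> bool" where
  "implements_ctrl a j gs A B = (\<forall>v. run gs v = ctrl_app (\<lambda>x. bit x a) A B j v)"

lemma implements_ctrl_append:
  "a \<noteq> j \<Longrightarrow> implements_ctrl a j gs A B \<Longrightarrow> implements_ctrl a j hs C D \<Longrightarrow>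
   implements_ctrl a j (gs @ hs) (qmult C A) (qmult D B)"
  unfolding implements_ctrl_def by (simp add: ctrl_app_ctrl_app[of "\<lambda>x. bit x a"])

lemma implements_ctrl_H: "implements_ctrl a j [Hg j] hadamard hadamard"
  by (simp add: implements_ctrl_def app1_eq_ctrl_app)

lemma implements_ctrl_S: "implements_ctrl a j [Sg j] (qdiag 1 \<i>) (qdiag 1 \<i>)"
  by (simp add: implements_ctrl_def app1_eq_ctrl_app phase_gate_eq)

lemma implements_ctrl_T: "implements_ctrl a j [Tg j] (qdiag 1 \<omega>) (qdiag 1 \<omega>)"
  by (simp add: implements_ctrl_def app1_eq_ctrl_app t_gate_eq)

lemma implements_ctrl_CNOT: "a \<noteq> j \<Longrightarrow> implements_ctrl a j [CNOTg a j] qI qX"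
  by (simp add: implements_ctrl_def ctrl_app_qI_qX)

lemma implements_ctrl_replicate:
  assumes "a \<noteq> j" "implements_ctrl a j [g] (qdiag 1 c) (qdiag 1 c)"
  shows "implements_ctrl a j (replicate (Suc m) g) (qdiag 1 (c^Suc m)) (qdiag 1 (c^Suc m))"
proof (induction m)
  case 0 then show ?case using assms(2) by simp
next
  case (Suc m)
  from implements_ctrl_append[OF assms(1) assms(2) Suc]
  show ?case by (simp add: mult.commute replicate_append_same[symmetric])
qed

lemma implements_ctrl_T_dagger:
  "a \<noteq> j \<Longrightarrow> implements_ctrl a j (T_dagger j) (qdiag 1 (\<omega>^7)) (qdiag 1 (\<omega>^7))"
  using implements_ctrl_replicate[OF _ implements_ctrl_T, of a j 6] by (simp add: numeral_eq_Suc)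

lemma implements_ctrl_S_dagger:
  "a \<noteq> j \<Longrightarrow> implements_ctrl a j (replicate 3 (Sg j)) (qdiag 1 (- \<i>)) (qdiag 1 (- \<i>))"
  using implements_ctrl_replicate[OF _ implements_ctrl_S, of a j 2] by (simp add: numeral_eq_Suc)

definition ctrl_Z :: "nat \<Rightarrow> nat \<Rightarrow> gate list" where
  "ctrl_Z a j = [Hg j, CNOTg a j, Hg j]"

definition ctrl_H :: "nat \<Rightarrow> nat \<Rightarrow> gate list" where
  "ctrl_H a j = replicate 3 (Sg j) @ [Hg j] @ T_dagger j @ [CNOTg a j] @ [Tg j] @ [Hg j] @ [Sg j]"

definition ctrl_D :: "nat \<Rightarrow> nat \<Rightarrow> gate list" where
  "ctrl_D a j = T_dagger j @ [CNOTg a j] @ [Tg j] @ [CNOTg a j]"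

definition ctrl_D_inv :: "nat \<Rightarrow> nat \<Rightarrow> gate list" where
  "ctrl_D_inv a j = [Tg j] @ [CNOTg a j] @ T_dagger j @ [CNOTg a j]"

lemma implements_ctrl_Z: "a \<noteq> j \<Longrightarrow> implements_ctrl a j (ctrl_Z a j) qI (qdiag 1 (-1))"
  using implements_ctrl_append[OF _ implements_ctrl_H
          implements_ctrl_append[OF _ implements_ctrl_CNOT implements_ctrl_H]]
  by (simp add: ctrl_Z_def qmult_assoc hadamard_X_hadamard hadamard_squared)

lemma implements_ctrl_H_gate: "a \<noteq> j \<Longrightarrow> implements_ctrl a j (ctrl_H a j) qI hadamard"
proof -
  assume aj: "a \<noteq> j"
  have H: "qmult hadamard (qmult hadamard A) = A" for A
    by (simp flip: qmult_assoc add: hadamard_squared)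
  from implements_ctrl_append[OF aj implements_ctrl_S_dagger[OF aj] implements_ctrl_append[OF aj
      implements_ctrl_H implements_ctrl_append[OF aj implements_ctrl_T_dagger[OF aj]
      implements_ctrl_append[OF aj implements_ctrl_CNOT[OF aj] implements_ctrl_append[OF aj
      implements_ctrl_T implements_ctrl_append[OF aj implements_ctrl_H implements_ctrl_S]]]]]]
  show ?thesis unfolding ctrl_H_def
    by (simp add: qmult_assoc hadamard_decomposition omega_mult_pow7 H
        flip: qI_eq_qdiag)
qed

lemma qX_qdiag_qX: "qmult qX (qmult (qdiag a b) (qmult qX M)) = qmult (qdiag b a) M"
  by (auto simp: qmult_def qdiag_def qX_def fun_eq_iff)

lemma implements_ctrl_D: "a \<noteq> j \<Longrightarrow> implements_ctrl a j (ctrl_D a j) qI (qdiag \<omega> (\<omega>^7))"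
  using implements_ctrl_append[OF _ implements_ctrl_T_dagger implements_ctrl_append[OF _
          implements_ctrl_CNOT implements_ctrl_append[OF _ implements_ctrl_T implements_ctrl_CNOT]]]
  by (simp add: ctrl_D_def qmult_assoc qX_qdiag_qX omega_mult_pow7 flip: qI_eq_qdiag)

lemma implements_ctrl_D_inv: "a \<noteq> j \<Longrightarrow> implements_ctrl a j (ctrl_D_inv a j) qI (qdiag (\<omega>^7) \<omega>)"
  using implements_ctrl_append[OF _ implements_ctrl_T implements_ctrl_append[OF _
          implements_ctrl_CNOT implements_ctrl_append[OF _ implements_ctrl_T_dagger implements_ctrl_CNOT]]]
  by (simp add: ctrl_D_inv_def qmult_assoc qX_qdiag_qX omega_mult_pow7 flip: qI_eq_qdiag)

subsection \<open>Two-level operators\<close>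

definition two_level :: "qmat \<Rightarrow> nat \<Rightarrow> nat \<Rightarrow> (nat \<Rightarrow> complex) \<Rightarrow> nat \<Rightarrow> complex" where
  "two_level M x y v = (\<lambda>i. if i = x then M False False * v x + M False True * v y
      else if i = y then M True False * v x + M True True * v y else v i)"

datatype tl_kind = KH | KD | KDi | KZ

fun kind_mat :: "tl_kind \<Rightarrow> qmat" where
  "kind_mat KH = hadamard"
| "kind_mat KD = qdiag \<omega> (\<omega>^7)"
| "kind_mat KDi = qdiag (\<omega>^7) \<omega>"
| "kind_mat KZ = qdiag 1 (-1)"

fun kind_ctrl_circ :: "tl_kind \<Rightarrow> nat \<Rightarrow> nat \<Rightarrow> gate list" where
  "kind_ctrl_circ KH a j = ctrl_H a j"
| "kind_ctrl_circ KD a j = ctrl_D a j"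
| "kind_ctrl_circ KDi a j = ctrl_D_inv a j"
| "kind_ctrl_circ KZ a j = ctrl_Z a j"

lemma implements_ctrl_kind: "a \<noteq> j \<Longrightarrow> implements_ctrl a j (kind_ctrl_circ k a j) qI (kind_mat k)"
  by (cases k) (simp_all add: implements_ctrl_H_gate implements_ctrl_D implements_ctrl_D_inv
      implements_ctrl_Z)

definition qswap :: "qmat \<Rightarrow> qmat" where "qswap M = (\<lambda>r c. M (\<not> r) (\<not> c))"

lemma qX_conj: "qmult qX (qmult M qX) = qswap M"
  by (auto simp: qmult_def qX_def qswap_def fun_eq_iff)

definition ctrl_kind_circ :: "bool \<Rightarrow> tl_kind \<Rightarrow> nat \<Rightarrow> nat \<Rightarrow> gate list" where
  "ctrl_kind_circ b k a j = (if b then not_circ j @ kind_ctrl_circ k a j @ not_circ j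
     else kind_ctrl_circ k a j)"

lemma implements_ctrl_kind_circ:
  assumes "a \<noteq> j"
  shows "implements_ctrl a j (ctrl_kind_circ b k a j) qI (if b then qswap (kind_mat k) else kind_mat k)"
proof -
  have X: "implements_ctrl a j (not_circ j) qX qX"
    by (auto simp: implements_ctrl_def run_not_circ ctrl_app_def qX_def)
  show ?thesis
    using implements_ctrl_append[OF assms X implements_ctrl_append[OF assms implements_ctrl_kind[OF assms] X]]
      implements_ctrl_kind[OF assms]
    by (simp add: ctrl_kind_circ_def qmult_assoc qX_conj qmult_qX_qX)
qed

definition fan_map :: "nat \<Rightarrow> nat list \<Rightarrow> nat \<Rightarrow> nat" where
  "fan_map j D i = (if bit i j then fold flip_bit D i else i)"

lemma bit_fan_map:
  "distinct D \<Longrightarrow> j \<notin> set D \<Longrightarrow> bit (fan_map j D i) q = (bit i q \<noteq> (bit i j \<and> q \<in> set D))"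
  by (auto simp: fan_map_def bit_fold_flip_bit)

lemma run_cnot_fan:
  "distinct D \<Longrightarrow> j \<notin> set D \<Longrightarrow> run (map (CNOTg j) D) v = (\<lambda>i. v (fan_map j D i))"
proof (induction D arbitrary: v)
  case Nil then show ?case by (simp add: fan_map_def fun_eq_iff)
next
  case (Cons k D)
  have "cnot_map j k (fan_map j D i) = fan_map j (k # D) i" for i
    by (rule bit_eqI) (use Cons.prems in \<open>auto simp: bit_cnot_map bit_fan_map\<close>)
  then show ?case using Cons by (simp add: cnot_map_def[symmetric])
qed

lemma run_not_circs:
  "distinct E \<Longrightarrow> run (concat (map not_circ E)) v = (\<lambda>i. v (fold flip_bit E i))"
proof (induction E arbitrary: v)
  case Nil then show ?case by simp
next
  case (Cons k E)
  have "flip_bit k (fold flip_bit E i) = fold flip_bit (k # E) i" for i :: nat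
    by (rule bit_eqI) (use Cons.prems in \<open>auto simp: bit_fold_flip_bit\<close>)
  then show ?case using Cons by (simp add: run_not_circ)
qed

definition diff_bit :: "nat \<Rightarrow> nat \<Rightarrow> nat" where
  "diff_bit x y = (LEAST j. bit x j \<noteq> bit y j)"

lemma diff_bit:
  fixes x y :: nat
  assumes "x < 2^n" "y < 2^n" "x \<noteq> y"
  shows "bit x (diff_bit x y) \<noteq> bit y (diff_bit x y)" and "diff_bit x y < n"
proof -
  have "\<exists>j. bit x j \<noteq> bit y j" using assms bit_eq_iff by blast
  then show *: "bit x (diff_bit x y) \<noteq> bit y (diff_bit x y)"
    unfolding diff_bit_def by (rule LeastI_ex)
  show "diff_bit x y < n" using * assms(1,2) less_power2_iff_bits not_le by metis
qed

text \<open>Let \<open>j\<close> be the lowest bit in which \<open>x\<close> and \<open>y\<close> differ and \<open>lo\<close> the one of them with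
  bit \<open>j\<close> clear. CNOTs from \<open>j\<close> make the two states agree off bit \<open>j\<close>, NOTs turn all those
  bits of \<open>lo\<close> into ones, so a NOT onto the ancilla \<open>n\<close> controlled by all bits but \<open>j\<close>
  marks exactly \<open>x\<close> and \<open>y\<close>; the matrix then acts on bit \<open>j\<close>, controlled by the ancilla.\<close>
definition two_level_circ :: "nat \<Rightarrow> tl_kind \<Rightarrow> nat \<Rightarrow> nat \<Rightarrow> gate list" where
  "two_level_circ n k x y = (let j = diff_bit x y; b = bit x j; lo = (if b then y else x);
     D = filter (\<lambda>q. q \<noteq> j \<and> bit x q \<noteq> bit y q) [0..<n];
     E = filter (\<lambda>q. q \<noteq> j \<and> \<not> bit lo q) [0..<n];
     C = filter (\<lambda>q. q \<noteq> j) [0..<n]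
   in map (CNOTg j) D @ concat (map not_circ E) @ mcx C n j @ ctrl_kind_circ b k n j
      @ mcx C n j @ concat (map not_circ E) @ map (CNOTg j) D)"

locale two_level_pair =
  fixes n x y :: nat
  assumes x_less: "x < 2^n" and y_less: "y < 2^n" and x_neq_y: "x \<noteq> y"
begin

abbreviation j where "j \<equiv> diff_bit x y"

definition lo where "lo = (if bit x j then y else x)"
definition hi where "hi = (if bit x j then x else y)"
definition diff_qubits where "diff_qubits = filter (\<lambda>q. q \<noteq> j \<and> bit x q \<noteq> bit y q) [0..<n]"
definition zero_qubits where "zero_qubits = filter (\<lambda>q. q \<noteq> j \<and> \<not> bit lo q) [0..<n]"
definition ctrl_qubits where "ctrl_qubits = filter (\<lambda>q. q \<noteq> j) [0..<n]"

definition fan where "fan = fan_map j diff_qubits"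
definition flips :: "nat \<Rightarrow> nat" where "flips = fold flip_bit zero_qubits"
definition mark where "mark i = (if all_bits ctrl_qubits i then flip_bit n i else i)"

lemma j_less: "j < n" and bit_j: "bit x j \<noteq> bit y j"
  using diff_bit[OF x_less y_less x_neq_y] by auto

lemma circ_eq:
  "two_level_circ n k x y = map (CNOTg j) diff_qubits @ concat (map not_circ zero_qubits)
     @ mcx ctrl_qubits n j @ ctrl_kind_circ (bit x j) k n j @ mcx ctrl_qubits n j
     @ concat (map not_circ zero_qubits) @ map (CNOTg j) diff_qubits"
  by (simp add: two_level_circ_def Let_def lo_def diff_qubits_def zero_qubits_def ctrl_qubits_def)

lemma distinct_qubits:
  "distinct diff_qubits" "j \<notin> set diff_qubits" "distinct zero_qubits" "j \<notin> set zero_qubits"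
  "distinct (n # j # ctrl_qubits)"
  using j_less by (auto simp: diff_qubits_def zero_qubits_def ctrl_qubits_def)

lemma bit_diff_less: "bit x q \<noteq> bit y q \<Longrightarrow> q < n"
  using x_less y_less less_power2_iff_bits not_le by metis

lemma bit_fold_diff_qubits:
  "bit (fold flip_bit diff_qubits (i::nat)) q = (bit i q \<noteq> (q < n \<and> q \<noteq> j \<and> bit x q \<noteq> bit y q))"
  using bit_fold_flip_bit[OF distinct_qubits(1), of i q] by (auto simp: diff_qubits_def)

lemma bit_fan: "bit (fan i) q = (bit i q \<noteq> (bit i j \<and> q < n \<and> q \<noteq> j \<and> bit x q \<noteq> bit y q))"
  using distinct_qubits by (auto simp: fan_def bit_fan_map diff_qubits_def)

lemma bit_flips: "bit (flips i) q = (bit i q \<noteq> (q < n \<and> q \<noteq> j \<and> \<not> bit lo q))"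
  using distinct_qubits by (auto simp: flips_def bit_fold_flip_bit zero_qubits_def)

lemma all_bits_ctrl_qubits: "all_bits ctrl_qubits i \<longleftrightarrow> (\<forall>q<n. q \<noteq> j \<longrightarrow> bit i q)"
  by (auto simp: ctrl_qubits_def all_bits_def)

lemma bit_mark: "bit (mark i) q = (bit i q \<noteq> (q = n \<and> all_bits ctrl_qubits i))"
  by (auto simp: mark_def)

lemma involutions: "fan (fan i) = i" "flips (flips i) = i" "mark (mark i) = i"
  using distinct_qubits j_less
  by (auto intro!: bit_eqI simp: bit_fan bit_flips mark_def all_bits_flip_bit)

lemma mark_flip_bit_j: "mark (flip_bit j i) = flip_bit j (mark i)"
  using distinct_qubits by (auto simp: mark_def all_bits_flip_bit flip_bit_commute)

lemma flips_flip_bit_j: "flips (flip_bit j i) = flip_bit j (flips i)"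
  by (rule bit_eqI) (auto simp: bit_flips)

lemma conj_flip_bit_j:
  "fan (flips (mark (flip_bit j (mark (flips (fan i)))))) = fold flip_bit diff_qubits (flip_bit j i)"
proof -
  have "fan (flips (mark (flip_bit j (mark (flips (fan i)))))) = fan (flip_bit j (fan i))"
    by (simp add: mark_flip_bit_j flips_flip_bit_j involutions)
  also have "\<dots> = fold flip_bit diff_qubits (flip_bit j i)"
    by (rule bit_eqI) (auto simp: bit_fan bit_fold_diff_qubits)
  finally show ?thesis .
qed

lemma swap_lo_hi:
  "fold flip_bit diff_qubits (flip_bit j lo) = hi" "fold flip_bit diff_qubits (flip_bit j hi) = lo"
proof -
  have sw: "bit (fold flip_bit diff_qubits (flip_bit j (z::nat))) q = (bit z q \<noteq> (bit x q \<noteq> bit y q))" for z q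
    using bit_j bit_diff_less by (cases "q = j") (auto simp: bit_fold_diff_qubits)
  have "bit hi q = (bit lo q \<noteq> (bit x q \<noteq> bit y q))" "bit lo q = (bit hi q \<noteq> (bit x q \<noteq> bit y q))" for q
    by (auto simp: lo_def hi_def)
  then show "fold flip_bit diff_qubits (flip_bit j lo) = hi" "fold flip_bit diff_qubits (flip_bit j hi) = lo"
    by (simp_all add: bit_eq_iff sw)
qed

lemma marked_iff:
  assumes "i < 2^n"
  shows "all_bits ctrl_qubits (flips (fan i)) \<longleftrightarrow> i = lo \<or> i = hi"
proof -
  have lo_hi: "lo < 2^n" "hi < 2^n" "\<not> bit lo j" "bit hi j"
    using x_less y_less bit_j by (auto simp: lo_def hi_def)
  have "all_bits ctrl_qubits (flips (fan i)) \<longleftrightarrow>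
      (\<forall>q<n. bit i q = (if bit i j then bit hi q else bit lo q))"
    using bit_j lo_hi(3,4) by (auto simp: all_bits_ctrl_qubits bit_flips bit_fan lo_def hi_def)
  also have "\<dots> \<longleftrightarrow> i = lo \<or> i = hi"
    using eq_if_low_bits_eq[OF assms lo_hi(1)] eq_if_low_bits_eq[OF assms lo_hi(2)] lo_hi(3,4)
    by (cases "bit i j") auto
  finally show ?thesis .
qed

lemma run_two_level_circ:
  "run (two_level_circ n k x y) (with_ancilla n v) = with_ancilla n (two_level (kind_mat k) x y v)"
proof
  fix i
  let ?M = "if bit x j then qswap (kind_mat k) else kind_mat k"
  let ?i' = "mark (flips (fan i))"
  let ?A = "if bit ?i' n then ?M else qI"
  let ?sw = "fold flip_bit diff_qubits (flip_bit j i)"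
  have "run (ctrl_kind_circ (bit x j) k n j) u = ctrl_app (\<lambda>x. bit x n) qI ?M j u" for u
    using implements_ctrl_kind_circ[of n j] j_less unfolding implements_ctrl_def by auto
  moreover have "run (two_level_circ n k x y) u
      = (\<lambda>l. run (ctrl_kind_circ (bit x j) k n j) (\<lambda>z. u (fan (flips (mark z)))) (mark (flips (fan l))))"
    for u
    using distinct_qubits
    by (simp add: circ_eq run_cnot_fan run_not_circs run_mcx fan_def[symmetric] flips_def[symmetric]
        mark_def[symmetric] del: run.simps)
  moreover have "bit ?i' j = bit i j" "fan (flips (mark ?i')) = i"
    using j_less distinct_qubits by (simp_all add: bit_mark bit_flips bit_fan involutions)
  ultimately have run_eq: "run (two_level_circ n k x y) (with_ancilla n v) i
      = ?A (bit i j) (bit i j) * with_ancilla n v i + ?A (bit i j) (\<not> bit i j) * with_ancilla n v ?sw"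
    by (simp add: ctrl_app_def conj_flip_bit_j)
  show "run (two_level_circ n k x y) (with_ancilla n v) i = with_ancilla n (two_level (kind_mat k) x y v) i"
  proof (cases "i < 2^n")
    case False
    then obtain q where q: "q \<ge> n" "bit i q" using less_power2_iff_bits by blast
    hence "\<not> ?sw < 2^n" using j_less distinct_qubits less_power2_iff_bits
      by (auto simp: bit_fold_flip_bit diff_qubits_def)
    then show ?thesis using False unfolding run_eq by (simp add: with_ancilla_def)
  next
    case True
    hence "bit ?i' n = (i = lo \<or> i = hi)"
      using marked_iff less_power2_iff_bits j_less by (simp add: bit_mark bit_flips bit_fan)
    then show ?thesis unfolding run_eq
      using True x_less y_less x_neq_y swap_lo_hi bit_j
      by (cases "bit x j") (auto simp: lo_def hi_def qswap_def two_level_def with_ancilla_def qI_def)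
  qed
qed

end

section \<open>Arithmetic in \<open>\<int>[\<omega>]\<close>\<close>

text \<open>\<open>Zw a b c d\<close> stands for \<open>a + b\<omega> + c\<omega>\<^sup>2 + d\<omega>\<^sup>3\<close>.\<close>
datatype zomega = Zw int int int int

fun zval :: "zomega \<Rightarrow> complex" where
  "zval (Zw a b c d) = Complex (of_int a + of_int (b - d) / sqrt 2) (of_int c + of_int (b + d) / sqrt 2)"

text \<open>\<open>|z|\<^sup>2 = sqnorm_int z + \<surd>2 sqnorm_rt2 z\<close>.\<close>
fun sqnorm_int :: "zomega \<Rightarrow> int" where
  "sqnorm_int (Zw a b c d) = a^2 + b^2 + c^2 + d^2"

fun sqnorm_rt2 :: "zomega \<Rightarrow> int" where
  "sqnorm_rt2 (Zw a b c d) = a*b + b*c + c*d - d*a"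

fun zw_add :: "zomega \<Rightarrow> zomega \<Rightarrow> zomega" where
  "zw_add (Zw a b c d) (Zw a' b' c' d') = Zw (a+a') (b+b') (c+c') (d+d')"

fun zw_sub :: "zomega \<Rightarrow> zomega \<Rightarrow> zomega" where
  "zw_sub (Zw a b c d) (Zw a' b' c' d') = Zw (a-a') (b-b') (c-c') (d-d')"

fun zw_omega :: "zomega \<Rightarrow> zomega" where
  "zw_omega (Zw a b c d) = Zw (-d) a b c"

fun rt2_dvd :: "zomega \<Rightarrow> bool" where
  "rt2_dvd (Zw a b c d) = (even (a - c) \<and> even (b - d))"

fun zw_div_rt2 :: "zomega \<Rightarrow> zomega" where
  "zw_div_rt2 (Zw a b c d) = Zw ((b - d) div 2) ((a + c) div 2) ((b + d) div 2) ((c - a) div 2)"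

fun coeff_sum :: "zomega \<Rightarrow> int" where
  "coeff_sum (Zw a b c d) = a + b + c + d"

fun same_parity :: "zomega \<Rightarrow> bool" where
  "same_parity (Zw a b c d) = (even (a - b) \<and> even (b - c) \<and> even (c - d))"

fun all_even :: "zomega \<Rightarrow> bool" where
  "all_even (Zw a b c d) = (even a \<and> even b \<and> even c \<and> even d)"

lemma omega_eq_Complex: "\<omega> = Complex (1 / sqrt 2) (1 / sqrt 2)"
proof -
  have "cis (pi/4) = Complex (sqrt 2 / 2) (sqrt 2 / 2)" by (simp add: cis.ctr cos_45 sin_45)
  thus ?thesis by (simp add: \<omega>_def real_div_sqrt)
qed

lemma zval_add: "zval (zw_add u v) = zval u + zval v"
  by (cases u; cases v) (simp add: complex_eq_iff field_simps)

lemma zval_sub: "zval (zw_sub u v) = zval u - zval v"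
  by (cases u; cases v) (simp add: complex_eq_iff field_simps)

lemma zval_omega: "zval (zw_omega z) = \<omega> * zval z"
  by (cases z) (simp add: omega_eq_Complex complex_eq_iff field_simps)

lemma zval_omega_pow: "zval ((zw_omega ^^ l) z) = \<omega>^l * zval z"
  by (induction l) (auto simp: zval_omega)

lemma rt2_dvdE:
  assumes "rt2_dvd z"
  obtains p q c d where "z = Zw (c + 2*p) (d + 2*q) c d" "zw_div_rt2 z = Zw q (c + p) (d + q) (-p)"
proof (cases z)
  case (Zw a b c d)
  with assms have "even (a - c)" "even (b - d)" by auto
  then obtain p q where "a = c + 2*p" "b = d + 2*q" by (metis evenE diff_add_cancel add.commute)
  with Zw that show thesis by simp
qed

lemma zval_div_rt2: "rt2_dvd z \<Longrightarrow> zval z = rt2 * zval (zw_div_rt2 z)"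
  by (erule rt2_dvdE) (simp add: rt2_def complex_eq_iff field_simps)

lemma norm_zval: "(cmod (zval z))^2 = of_int (sqnorm_int z) + sqrt 2 * of_int (sqnorm_rt2 z)"
  by (cases z) (simp only: cmod_power2 zval.simps complex.sel sqnorm_int.simps sqnorm_rt2.simps,
      simp add: field_simps power2_eq_square)

lemma sqnorm_int_nonneg: "sqnorm_int z \<ge> 0"
  by (cases z) simp

lemma sqnorm_int_eq_0: "sqnorm_int z = 0 \<Longrightarrow> z = Zw 0 0 0 0"
  by (cases z) (simp add: power2_eq_square add_nonneg_eq_0_iff)

lemma sqnorm_omega_pow [simp]:
  "sqnorm_int ((zw_omega ^^ l) z) = sqnorm_int z" "sqnorm_rt2 ((zw_omega ^^ l) z) = sqnorm_rt2 z"
proof (induction l)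
  case (Suc l)
  have "sqnorm_int (zw_omega u) = sqnorm_int u" "sqnorm_rt2 (zw_omega u) = sqnorm_rt2 u" for u
    by (cases u; simp add: algebra_simps)+
  with Suc show "sqnorm_int ((zw_omega ^^ Suc l) z) = sqnorm_int z"
    "sqnorm_rt2 ((zw_omega ^^ Suc l) z) = sqnorm_rt2 z" by simp_all
qed simp_all

lemma parity_omega_pow [simp]:
  "rt2_dvd ((zw_omega ^^ l) z) = rt2_dvd z" "even (coeff_sum ((zw_omega ^^ l) z)) = even (coeff_sum z)"
proof (induction l)
  case (Suc l)
  have "rt2_dvd (zw_omega u) = rt2_dvd u" "even (coeff_sum (zw_omega u)) = even (coeff_sum u)" for u
    by (cases u; auto simp: even_add)+
  with Suc show "rt2_dvd ((zw_omega ^^ Suc l) z) = rt2_dvd z"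
    "even (coeff_sum ((zw_omega ^^ Suc l) z)) = even (coeff_sum z)" by simp_all
qed simp_all

lemma sqnorm_div_rt2:
  "rt2_dvd z \<Longrightarrow> sqnorm_int z = 2 * sqnorm_int (zw_div_rt2 z)"
  "rt2_dvd z \<Longrightarrow> sqnorm_rt2 z = 2 * sqnorm_rt2 (zw_div_rt2 z)"
  by (erule rt2_dvdE; simp add: power2_eq_square algebra_simps)+

lemma sqnorm_parallelogram:
  "sqnorm_int (zw_add u v) + sqnorm_int (zw_sub u v) = 2 * (sqnorm_int u + sqnorm_int v)"
  "sqnorm_rt2 (zw_add u v) + sqnorm_rt2 (zw_sub u v) = 2 * (sqnorm_rt2 u + sqnorm_rt2 v)"
  by (cases u; cases v; simp add: power2_eq_square algebra_simps)+

lemma odd_sqnorm_int: "odd (sqnorm_int z) = odd (coeff_sum z)"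
  by (cases z) (auto simp: power2_eq_square even_add even_mult_iff)

lemma odd_sqnorm_rt2: "even (coeff_sum z) \<Longrightarrow> odd (sqnorm_rt2 z) = (\<not> rt2_dvd z)"
  by (cases z) (auto simp: even_add even_mult_iff)

lemma rt2_dvd_even_coeff_sum: "rt2_dvd z \<Longrightarrow> even (coeff_sum z)"
  by (cases z) (auto simp: even_add)

lemma zw_omega_pow_Zw:
  "(zw_omega ^^ 0) (Zw a b c d) = Zw a b c d" "(zw_omega ^^ 1) (Zw a b c d) = Zw (-d) a b c"
  "(zw_omega ^^ 2) (Zw a b c d) = Zw (-c) (-d) a b" "(zw_omega ^^ 3) (Zw a b c d) = Zw (-b) (-c) (-d) a"
  by (simp_all add: numeral_eq_Suc)

lemma ex_less_4: "P 0 \<or> P 1 \<or> P 2 \<or> P 3 \<Longrightarrow> \<exists>l<(4::nat). P l"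
  by (auto simp: Ex_less_Suc numeral_eq_Suc)

lemma odd_pair_same_parity:
  assumes "odd (coeff_sum z1)" "odd (coeff_sum z2)"
  shows "\<exists>l<4. same_parity (zw_add z1 ((zw_omega ^^ l) z2))"
proof (cases z1; cases z2)
  fix a1 b1 c1 d1 a2 b2 c2 d2
  assume z: "z1 = Zw a1 b1 c1 d1" "z2 = Zw a2 b2 c2 d2"
  have "(even (a1+a2 - (b1+b2)) \<and> even (b1+b2-(c1+c2)) \<and> even (c1+c2-(d1+d2))) \<or>
    (even (a1+ -d2 - (b1+a2)) \<and> even (b1+a2-(c1+b2)) \<and> even (c1+b2-(d1+c2))) \<or>
    (even (a1+ -c2 - (b1+ -d2)) \<and> even (b1+ -d2-(c1+a2)) \<and> even (c1+a2-(d1+b2))) \<or>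
    (even (a1+ -b2 - (b1+ -c2)) \<and> even (b1+ -c2-(c1+ -d2)) \<and> even (c1+ -d2-(d1+a2)))"
    using assms unfolding z coeff_sum.simps by presburger
  then show ?thesis unfolding z by (intro ex_less_4) (simp only: zw_omega_pow_Zw zw_add.simps same_parity.simps)
qed

lemma non_rt2_dvd_pair_all_even:
  assumes "even (coeff_sum z1)" "\<not> rt2_dvd z1" "even (coeff_sum z2)" "\<not> rt2_dvd z2"
  shows "\<exists>l<4. all_even (zw_add z1 ((zw_omega ^^ l) z2))"
proof (cases z1; cases z2)
  fix a1 b1 c1 d1 a2 b2 c2 d2
  assume z: "z1 = Zw a1 b1 c1 d1" "z2 = Zw a2 b2 c2 d2"
  have "(even (a1+a2) \<and> even (b1+b2) \<and> even (c1+c2) \<and> even (d1+d2)) \<or>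
    (even (a1+ -d2) \<and> even (b1+a2) \<and> even (c1+b2) \<and> even (d1+c2)) \<or>
    (even (a1+ -c2) \<and> even (b1+ -d2) \<and> even (c1+a2) \<and> even (d1+b2)) \<or>
    (even (a1+ -b2) \<and> even (b1+ -c2) \<and> even (c1+ -d2) \<and> even (d1+a2))"
    using assms unfolding z coeff_sum.simps rt2_dvd.simps by presburger
  then show ?thesis unfolding z by (intro ex_less_4) (simp only: zw_omega_pow_Zw zw_add.simps all_even.simps)
qed

lemma same_parity_sub: "same_parity (zw_add u v) \<Longrightarrow> same_parity (zw_sub u v)"
  by (cases u; cases v) (auto simp: even_add)

lemma all_even_sub: "all_even (zw_add u v) \<Longrightarrow> all_even (zw_sub u v)"
  by (cases u; cases v) (auto simp: even_add)

lemma same_parity_div_rt2: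
  assumes "same_parity z"
  shows "rt2_dvd z \<and> even (coeff_sum (zw_div_rt2 z))"
proof -
  have "rt2_dvd z" using assms by (induction z) auto
  moreover obtain p q c d where z: "z = Zw (c + 2*p) (d + 2*q) c d"
    and div: "zw_div_rt2 z = Zw q (c + p) (d + q) (-p)"
    using rt2_dvdE[OF calculation] .
  have "even (c + 2*p - (d + 2*q))" using assms unfolding z same_parity.simps by blast
  then have "even (q + (c + p) + (d + q) + - p)" by presburger
  with \<open>rt2_dvd z\<close> show ?thesis unfolding div coeff_sum.simps by blast
qed

lemma all_even_div_rt2: "all_even z \<Longrightarrow> rt2_dvd z \<and> rt2_dvd (zw_div_rt2 z)"
  by (cases z) (auto elim!: evenE)

section \<open>Column reduction by two-level operators\<close>

text \<open>\<open>Ph y\<close> multiplies the amplitude of \<open>y\<close> by \<open>\<omega>\<close>. It is needed only for one qubit, where no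
  third basis state is available to absorb the inverse phase of a two-level \<open>diag(\<omega>, \<omega>\<^sup>7)\<close>.\<close>
datatype prim = TL tl_kind nat nat | Ph nat

fun prim_op :: "prim \<Rightarrow> (nat \<Rightarrow> complex) \<Rightarrow> nat \<Rightarrow> complex" where
  "prim_op (TL k x y) v = two_level (kind_mat k) x y v"
| "prim_op (Ph y) v = (\<lambda>i. if i = y then \<omega> * v i else v i)"

definition prims_op :: "prim list \<Rightarrow> (nat \<Rightarrow> complex) \<Rightarrow> nat \<Rightarrow> complex" where
  "prims_op ps v = fold prim_op ps v"

lemma prims_op_simps [simp]:
  "prims_op [] v = v" "prims_op (p # ps) v = prims_op ps (prim_op p v)"
  "prims_op (ps @ qs) v = prims_op qs (prims_op ps v)"
  by (simp_all add: prims_op_def)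

fun prim_ok :: "nat \<Rightarrow> prim \<Rightarrow> bool" where
  "prim_ok n (TL k x y) = (x < 2^n \<and> y < 2^n \<and> x \<noteq> y)"
| "prim_ok n (Ph y) = (n = 1 \<and> y < 2)"

definition scaled_state :: "nat \<Rightarrow> (nat \<Rightarrow> zomega) \<Rightarrow> nat \<Rightarrow> nat \<Rightarrow> complex" where
  "scaled_state n z k = (\<lambda>i. if i < 2^n then zval (z i) / rt2^k else 0)"

text \<open>The state \<open>z / \<surd>2\<^sup>k\<close> has norm \<open>1\<close>; by the irrationality of \<open>\<surd>2\<close> this splits into two
  integer equations.\<close>
definition norm_invariant :: "nat \<Rightarrow> (nat \<Rightarrow> zomega) \<Rightarrow> nat \<Rightarrow> bool" where
  "norm_invariant n z k =
     ((\<Sum>i<2^n. sqnorm_int (z i)) = 2^k \<and> (\<Sum>i<2^n. sqnorm_rt2 (z i)) = 0)"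

definition steps_to :: "nat \<Rightarrow> prim list \<Rightarrow> (nat \<Rightarrow> zomega) \<Rightarrow> nat \<Rightarrow> (nat \<Rightarrow> zomega) \<Rightarrow> nat \<Rightarrow> bool" where
  "steps_to n ps z k z' k' =
     ((\<forall>p\<in>set ps. prim_ok n p) \<and> prims_op ps (scaled_state n z k) = scaled_state n z' k')"

lemma steps_to_Nil: "steps_to n [] z k z k"
  by (simp add: steps_to_def)

lemma steps_to_append:
  "steps_to n ps z k z1 k1 \<Longrightarrow> steps_to n qs z1 k1 z2 k2 \<Longrightarrow> steps_to n (ps @ qs) z k z2 k2"
  by (auto simp: steps_to_def)

definition rotated :: "(nat \<Rightarrow> zomega) \<Rightarrow> (nat \<Rightarrow> zomega) \<Rightarrow> bool" where
  "rotated z' z = (\<forall>i. \<exists>m. z' i = (zw_omega ^^ m) (z i))"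

lemma rotated_refl: "rotated z z"
  by (auto simp: rotated_def intro: exI[of _ 0])

lemma rotated_fun_upd: "rotated z' z \<Longrightarrow> rotated (z'(x := (zw_omega ^^ m) (z' x))) z"
  unfolding rotated_def by (metis fun_upd_apply funpow_add comp_apply)

lemma norm_invariant_rotated: "rotated z' z \<Longrightarrow> norm_invariant n z' k = norm_invariant n z k"
proof -
  assume "rotated z' z"
  then have "sqnorm_int (z' i) = sqnorm_int (z i)" "sqnorm_rt2 (z' i) = sqnorm_rt2 (z i)" for i
    unfolding rotated_def by (metis sqnorm_omega_pow)+
  then show ?thesis by (simp add: norm_invariant_def)
qed

lemma steps_to_hadamard:
  assumes "x < 2^n" "y < 2^n" "x \<noteq> y" "rt2_dvd (zw_add (z x) (z y))" "rt2_dvd (zw_sub (z x) (z y))"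
  shows "steps_to n [TL KH x y] z k
    (z(x := zw_div_rt2 (zw_add (z x) (z y)), y := zw_div_rt2 (zw_sub (z x) (z y)))) k"
proof -
  have "zval (z x) + zval (z y) = rt2 * zval (zw_div_rt2 (zw_add (z x) (z y)))"
    "zval (z x) - zval (z y) = rt2 * zval (zw_div_rt2 (zw_sub (z x) (z y)))"
    using zval_div_rt2[OF assms(4)] zval_div_rt2[OF assms(5)] by (simp_all add: zval_add zval_sub)
  then show ?thesis using assms
    by (auto simp: steps_to_def two_level_def scaled_state_def hadamard_eq field_simps)
qed

lemma steps_to_phase:
  assumes "x < 2^n" "y < 2^n" "x \<noteq> y"
  shows "steps_to n [TL KD x y] z k (z(x := zw_omega (z x), y := (zw_omega ^^ 7) (z y))) k"
  using assms
  by (auto simp: steps_to_def two_level_def scaled_state_def qdiag_def zval_omega zval_omega_pow)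

lemma steps_to_Ph: "y < 2 \<Longrightarrow> steps_to 1 [Ph y] z k (z(y := zw_omega (z y))) k"
  by (auto simp: steps_to_def scaled_state_def zval_omega)

lemma scaled_state_Suc:
  "\<forall>i<2^n. rt2_dvd (z i) \<Longrightarrow> scaled_state n z (Suc k) = scaled_state n (\<lambda>i. zw_div_rt2 (z i)) k"
  by (auto simp: scaled_state_def fun_eq_iff zval_div_rt2[symmetric] field_simps)

lemma phase_step:
  assumes "n \<ge> 1" "x1 < 2^n" "x2 < 2^n" "x1 \<noteq> x2"
  obtains p z' where "steps_to n [p] z k z' k" "z' x1 = z x1" "z' x2 = zw_omega (z x2)" "rotated z' z"
proof (cases "n = 1")
  case True
  have "steps_to n [Ph x2] z k (z(x2 := zw_omega (z x2))) k"
    using steps_to_Ph[of x2 z k] True assms by simp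
  moreover have "rotated (z(x2 := zw_omega (z x2))) z"
    using rotated_fun_upd[OF rotated_refl, of z x2 1] by simp
  ultimately show thesis using that assms by simp
next
  case False
  then have "(4::nat) \<le> 2^n"
    using assms(1) power_increasing[of 2 n "2::nat"] by simp
  moreover have "\<exists>u\<in>{0, 1, 2::nat}. u \<noteq> x1 \<and> u \<noteq> x2" by auto
  then obtain u :: nat where "u \<in> {0, 1, 2}" "u \<noteq> x1" "u \<noteq> x2" by blast
  ultimately have u: "u < 2^n" "u \<noteq> x1" "u \<noteq> x2" by auto
  have rot: "rotated (z(x2 := (zw_omega ^^ 1) (z x2))) z"
    by (rule rotated_fun_upd[OF rotated_refl])
  have "rotated ((z(x2 := zw_omega (z x2)))(u := (zw_omega ^^ 7) (z u))) z"
    using rotated_fun_upd[OF rot, where x=u and m=7] u by simp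
  then show thesis using that[OF steps_to_phase[OF assms(3) u(1)]] u assms(4) by simp
qed

lemma rotated_trans: "rotated z2 z1 \<Longrightarrow> rotated z1 z \<Longrightarrow> rotated z2 z"
  unfolding rotated_def by (metis funpow_add comp_apply)

lemma phase_align:
  assumes "n \<ge> 1" "x1 < 2^n" "x2 < 2^n" "x1 \<noteq> x2"
  shows "\<exists>ps z'. steps_to n ps z k z' k \<and> length ps = l \<and> z' x1 = z x1
    \<and> z' x2 = (zw_omega ^^ l) (z x2) \<and> rotated z' z"
proof (induction l)
  case 0
  show ?case using steps_to_Nil rotated_refl by fastforce
next
  case (Suc l)
  then obtain ps z1 where z1: "steps_to n ps z k z1 k" "length ps = l" "z1 x1 = z x1"
    "z1 x2 = (zw_omega ^^ l) (z x2)" "rotated z1 z" by blast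
  obtain p z2 where "steps_to n [p] z1 k z2 k" "z2 x1 = z1 x1" "z2 x2 = zw_omega (z1 x2)" "rotated z2 z1"
    using phase_step[OF assms] .
  with z1 show ?case
    by (intro exI[of _ "ps @ [p]"] exI[of _ z2]) (auto intro: steps_to_append rotated_trans)
qed

lemma sum_fun_upd2:
  fixes g :: "'a \<Rightarrow> 'b::ab_group_add"
  assumes "finite A" "x \<in> A" "y \<in> A" "x \<noteq> y"
  shows "(\<Sum>i\<in>A. g ((z(x := a, y := b)) i)) = (\<Sum>i\<in>A. g (z i)) - g (z x) - g (z y) + g a + g b"
proof -
  have "(\<Sum>i\<in>A. g ((z(x := a, y := b)) i)) = (\<Sum>i\<in>A. g (z i)
      + ((if i = x then g a - g (z x) else 0) + (if i = y then g b - g (z y) else 0)))"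
    using assms by (intro sum.cong) auto
  also have "\<dots> = (\<Sum>i\<in>A. g (z i)) - g (z x) - g (z y) + g a + g b"
    using assms by (simp add: sum.distrib sum.delta)
  finally show ?thesis .
qed

lemma norm_invariant_hadamard:
  assumes "norm_invariant n z k" "x < 2^n" "y < 2^n" "x \<noteq> y"
    and s: "rt2_dvd (zw_add (z x) (z y))" and d: "rt2_dvd (zw_sub (z x) (z y))"
  shows "norm_invariant n (z(x := zw_div_rt2 (zw_add (z x) (z y)), y := zw_div_rt2 (zw_sub (z x) (z y)))) k"
    (is "norm_invariant n ?z' k")
proof -
  have "sqnorm_int (zw_div_rt2 (zw_add (z x) (z y))) + sqnorm_int (zw_div_rt2 (zw_sub (z x) (z y)))
      = sqnorm_int (z x) + sqnorm_int (z y)"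
    "sqnorm_rt2 (zw_div_rt2 (zw_add (z x) (z y))) + sqnorm_rt2 (zw_div_rt2 (zw_sub (z x) (z y)))
      = sqnorm_rt2 (z x) + sqnorm_rt2 (z y)"
    using sqnorm_parallelogram[of "z x" "z y"] sqnorm_div_rt2[OF s] sqnorm_div_rt2[OF d] by simp_all
  moreover have "(\<Sum>i<2^n. g (?z' i)) = (\<Sum>i<2^n. g (z i)) - g (z x) - g (z y)
      + g (zw_div_rt2 (zw_add (z x) (z y))) + g (zw_div_rt2 (zw_sub (z x) (z y)))"
    for g :: "zomega \<Rightarrow> int"
    using assms(2-4) by (intro sum_fun_upd2) auto
  ultimately show ?thesis using assms(1) by (simp add: norm_invariant_def)
qed

definition pair_fixable :: "(zomega \<Rightarrow> bool) \<Rightarrow> nat \<Rightarrow> zomega \<Rightarrow> zomega \<Rightarrow> bool" where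
  "pair_fixable good l u v =
    (let s = zw_add u ((zw_omega ^^ l) v); d = zw_sub u ((zw_omega ^^ l) v)
     in rt2_dvd s \<and> rt2_dvd d \<and> good (zw_div_rt2 s) \<and> good (zw_div_rt2 d))"

lemma hadamard_pair_step:
  assumes "n \<ge> 1" "x1 < 2^n" "x2 < 2^n" "x1 \<noteq> x2" "norm_invariant n z k"
    and fixable: "pair_fixable good l (z x1) (z x2)"
  shows "\<exists>ps z'. steps_to n ps z k z' k \<and> length ps = Suc l \<and> norm_invariant n z' k
    \<and> good (z' x1) \<and> good (z' x2) \<and> (\<forall>i. i \<noteq> x1 \<longrightarrow> i \<noteq> x2 \<longrightarrow> (\<exists>m. z' i = (zw_omega ^^ m) (z i)))"
proof -
  obtain ps z1 where z1: "steps_to n ps z k z1 k" "length ps = l" "z1 x1 = z x1"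
    "z1 x2 = (zw_omega ^^ l) (z x2)" "rotated z1 z"
    using phase_align[OF assms(1-4)] by blast
  define z2 where "z2 = z1(x1 := zw_div_rt2 (zw_add (z1 x1) (z1 x2)), x2 := zw_div_rt2 (zw_sub (z1 x1) (z1 x2)))"
  have s: "rt2_dvd (zw_add (z1 x1) (z1 x2))" and d: "rt2_dvd (zw_sub (z1 x1) (z1 x2))"
    and good: "good (z2 x1)" "good (z2 x2)"
    using fixable assms(4) by (simp_all add: pair_fixable_def Let_def z1 z2_def)
  have "steps_to n (ps @ [TL KH x1 x2]) z k z2 k"
    unfolding z2_def by (rule steps_to_append[OF z1(1) steps_to_hadamard[OF assms(2-4) s d]])
  moreover have "norm_invariant n z2 k"
    unfolding z2_def using norm_invariant_rotated[OF z1(5)] assms by (intro norm_invariant_hadamard s d) auto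
  moreover have "\<forall>i. i \<noteq> x1 \<longrightarrow> i \<noteq> x2 \<longrightarrow> (\<exists>m. z2 i = (zw_omega ^^ m) (z i))"
    using z1(5) by (simp add: z2_def rotated_def)
  ultimately show ?thesis using z1(2) good by (intro exI[of _ "ps @ [TL KH x1 x2]"] exI[of _ z2]) auto
qed

lemma two_elements_if_card_even:
  assumes "finite A" "even (card A)" "A \<noteq> {}"
  obtains x1 x2 where "x1 \<in> A" "x2 \<in> A" "x1 \<noteq> x2"
proof -
  obtain x1 where x1: "x1 \<in> A" using assms(3) by blast
  have "A \<noteq> {x1}" using assms(2) by auto
  then obtain x2 where "x2 \<in> A" "x2 \<noteq> x1" using x1 by blast
  then show thesis using that x1 by blast
qed

lemma repair_pair:
  fixes bad A :: "zomega \<Rightarrow> bool"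
  assumes n: "n \<ge> 1" and x: "x1 < 2^n" "x2 < 2^n" "x1 \<noteq> x2" and inv: "norm_invariant n z k"
    and A: "\<forall>i<2^n. A (z i)" and l: "l < 4" "pair_fixable (\<lambda>w. A w \<and> \<not> bad w) l (z x1) (z x2)"
    and bad_rot: "\<And>u l. bad ((zw_omega ^^ l) u) = bad u"
    and A_rot: "\<And>u l. A ((zw_omega ^^ l) u) = A u"
  shows "\<exists>ps z'. steps_to n ps z k z' k \<and> length ps \<le> 4 \<and> norm_invariant n z' k
    \<and> (\<forall>i<2^n. A (z' i)) \<and> {i. i < 2^n \<and> bad (z' i)} = {i. i < 2^n \<and> bad (z i)} - {x1, x2}"
proof -
  obtain ps z' where z': "steps_to n ps z k z' k" "length ps = Suc l"
    "norm_invariant n z' k" "A (z' x1) \<and> \<not> bad (z' x1)" "A (z' x2) \<and> \<not> bad (z' x2)"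
    "\<forall>i. i \<noteq> x1 \<longrightarrow> i \<noteq> x2 \<longrightarrow> (\<exists>m. z' i = (zw_omega ^^ m) (z i))"
    using hadamard_pair_step[OF n x inv l(2)] by blast
  have "(bad (z' i) \<longleftrightarrow> bad (z i) \<and> i \<noteq> x1 \<and> i \<noteq> x2) \<and> A (z' i)" if "i < 2^n" for i
  proof (cases "i = x1 \<or> i = x2")
    case False
    then obtain m where "z' i = (zw_omega ^^ m) (z i)" using z'(6) by blast
    then show ?thesis using False A \<open>i < 2^n\<close> by (simp add: bad_rot A_rot)
  qed (use z'(4,5) in auto)
  then show ?thesis using z'(1-3) l(1) by (intro exI[of _ ps] exI[of _ z']) auto
qed

text \<open>Entries violating \<open>bad\<close> come in pairs (their number is even), and each pair can be
  repaired by a phase on one entry followed by a two-level Hadamard.\<close>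
lemma pairwise_reduction:
  fixes bad A :: "zomega \<Rightarrow> bool"
  assumes n: "n \<ge> 1"
    and even_card: "\<And>z. norm_invariant n z k \<Longrightarrow> \<forall>i<2^n. A (z i) \<Longrightarrow>
      even (card {i. i < 2^n \<and> bad (z i)})"
    and pair: "\<And>u v. bad u \<Longrightarrow> bad v \<Longrightarrow> A u \<Longrightarrow> A v \<Longrightarrow>
      \<exists>l<4. pair_fixable (\<lambda>w. A w \<and> \<not> bad w) l u v"
    and bad_rot: "\<And>u l. bad ((zw_omega ^^ l) u) = bad u"
    and A_rot: "\<And>u l. A ((zw_omega ^^ l) u) = A u"
  shows "norm_invariant n z k \<Longrightarrow> \<forall>i<2^n. A (z i) \<Longrightarrow>
    \<exists>ps z'. steps_to n ps z k z' k \<and> length ps \<le> 2 * card {i. i < 2^n \<and> bad (z i)}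
      \<and> norm_invariant n z' k \<and> (\<forall>i<2^n. A (z' i) \<and> \<not> bad (z' i))"
proof (induction "card {i. i < 2^n \<and> bad (z i)}" arbitrary: z rule: less_induct)
  case less
  define B where "B = {i. i < 2^n \<and> bad (z i)}"
  have fin: "finite B" unfolding B_def by simp
  show ?case
  proof (cases "B = {}")
    case True
    then show ?thesis using less.prems
      by (intro exI[of _ "[]"] exI[of _ z]) (auto simp: B_def steps_to_Nil)
  next
    case False
    obtain x1 x2 where x: "x1 \<in> B" "x2 \<in> B" "x1 \<noteq> x2"
      using two_elements_if_card_even[OF fin even_card[OF less.prems, folded B_def] False] .
    then have x_less: "x1 < 2^n" "x2 < 2^n" and "bad (z x1)" "bad (z x2)" "A (z x1)" "A (z x2)"
      using less.prems(2) by (auto simp: B_def)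
    then obtain l where l: "l < 4" "pair_fixable (\<lambda>w. A w \<and> \<not> bad w) l (z x1) (z x2)"
      using pair by blast
    then obtain ps1 z1 where z1: "steps_to n ps1 z k z1 k" "length ps1 \<le> 4" "norm_invariant n z1 k"
      "\<forall>i<2^n. A (z1 i)" "{i. i < 2^n \<and> bad (z1 i)} = B - {x1, x2}"
      using repair_pair[OF n x_less x(3) less.prems l bad_rot A_rot] B_def by blast
    have "card {x1, x2} \<le> card B" using x fin by (intro card_mono) auto
    then have card_B: "card B \<ge> 2" "card (B - {x1, x2}) = card B - 2"
      using x fin by (simp_all add: card_Diff_subset)
    then obtain ps2 z' where z': "steps_to n ps2 z1 k z' k" "length ps2 \<le> 2 * (card B - 2)"
      "norm_invariant n z' k" "\<forall>i<2^n. A (z' i) \<and> \<not> bad (z' i)"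
      using less.hyps[of z1] z1(3-5) unfolding B_def by fastforce
    have "length (ps1 @ ps2) \<le> 2 * card B" using z1(2) z'(2) card_B(1) by simp
    then show ?thesis using z1(1) z'(1,3,4) unfolding B_def
      by (intro exI[of _ "ps1 @ ps2"] exI[of _ z']) (auto intro: steps_to_append)
  qed
qed

lemma make_coeff_sums_even:
  assumes "n \<ge> 1" "norm_invariant n z (Suc k)"
  shows "\<exists>ps z'. steps_to n ps z (Suc k) z' (Suc k) \<and> length ps \<le> 2 * 2^n
    \<and> norm_invariant n z' (Suc k) \<and> (\<forall>i<2^n. even (coeff_sum (z' i)))"
proof -
  have "\<exists>ps z'. steps_to n ps z (Suc k) z' (Suc k) \<and> length ps \<le> 2 * card {i. i < 2^n \<and> odd (coeff_sum (z i))}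
    \<and> norm_invariant n z' (Suc k) \<and> (\<forall>i<2^n. True \<and> \<not> odd (coeff_sum (z' i)))"
  proof (rule pairwise_reduction[OF assms(1) _ _ _ _ assms(2)])
    fix z assume "norm_invariant n z (Suc k)"
    then have "even (\<Sum>i<2^n. sqnorm_int (z i))" by (simp add: norm_invariant_def)
    then show "even (card {i. i < 2^n \<and> odd (coeff_sum (z i))})"
      by (simp add: even_sum_iff odd_sqnorm_int Collect_conj_eq lessThan_def Int_commute)
  next
    fix u v assume "odd (coeff_sum u)" "odd (coeff_sum v)"
    then obtain l where "l < 4" "same_parity (zw_add u ((zw_omega ^^ l) v))"
      using odd_pair_same_parity by blast
    then show "\<exists>l<4. pair_fixable (\<lambda>w. True \<and> \<not> odd (coeff_sum w)) l u v"
      using same_parity_div_rt2 same_parity_sub by (auto simp: pair_fixable_def)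
  qed simp_all
  moreover have "card {i. i < 2^n \<and> P i} \<le> 2^n" for P :: "nat \<Rightarrow> bool"
    using card_mono[of "{..<2^n}" "{i. i < 2^n \<and> P i}"] by auto
  ultimately show ?thesis by (meson le_trans mult_le_mono2)
qed

lemma make_rt2_divisible:
  assumes "n \<ge> 1" "norm_invariant n z k" "\<forall>i<2^n. even (coeff_sum (z i))"
  shows "\<exists>ps z'. steps_to n ps z k z' k \<and> length ps \<le> 2 * 2^n
    \<and> norm_invariant n z' k \<and> (\<forall>i<2^n. rt2_dvd (z' i))"
proof -
  have "\<exists>ps z'. steps_to n ps z k z' k \<and> length ps \<le> 2 * card {i. i < 2^n \<and> \<not> rt2_dvd (z i)}
    \<and> norm_invariant n z' k \<and> (\<forall>i<2^n. even (coeff_sum (z' i)) \<and> \<not> \<not> rt2_dvd (z' i))"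
  proof (rule pairwise_reduction[OF assms(1) _ _ _ _ assms(2,3)])
    fix z assume "norm_invariant n z k" "\<forall>i<2^n. even (coeff_sum (z i))"
    then have "even (\<Sum>i<2^n. sqnorm_rt2 (z i))" and "\<forall>i<2^n. odd (sqnorm_rt2 (z i)) = (\<not> rt2_dvd (z i))"
      by (simp_all add: norm_invariant_def odd_sqnorm_rt2)
    then show "even (card {i. i < 2^n \<and> \<not> rt2_dvd (z i)})"
      by (simp add: even_sum_iff Collect_conj_eq lessThan_def Int_commute cong: conj_cong)
  next
    fix u v assume "\<not> rt2_dvd u" "\<not> rt2_dvd v" "even (coeff_sum u)" "even (coeff_sum v)"
    then obtain l where "l < 4" "all_even (zw_add u ((zw_omega ^^ l) v))"
      using non_rt2_dvd_pair_all_even by blast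
    then show "\<exists>l<4. pair_fixable (\<lambda>w. even (coeff_sum w) \<and> \<not> \<not> rt2_dvd w) l u v"
      using all_even_div_rt2 all_even_sub rt2_dvd_even_coeff_sum by (auto simp: pair_fixable_def)
  qed simp_all
  moreover have "card {i. i < 2^n \<and> P i} \<le> 2^n" for P :: "nat \<Rightarrow> bool"
    using card_mono[of "{..<2^n}" "{i. i < 2^n \<and> P i}"] by auto
  ultimately show ?thesis by (meson le_trans mult_le_mono2)
qed

lemma reduce_exponent_step:
  assumes "n \<ge> 1" "norm_invariant n z (Suc k)"
  shows "\<exists>ps z'. steps_to n ps z (Suc k) z' k \<and> length ps \<le> 4 * 2^n \<and> norm_invariant n z' k"
proof -
  obtain ps1 z1 where z1: "steps_to n ps1 z (Suc k) z1 (Suc k)" "length ps1 \<le> 2 * 2^n"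
    "norm_invariant n z1 (Suc k)" "\<forall>i<2^n. even (coeff_sum (z1 i))"
    using make_coeff_sums_even[OF assms] by blast
  obtain ps2 z2 where z2: "steps_to n ps2 z1 (Suc k) z2 (Suc k)" "length ps2 \<le> 2 * 2^n"
    "norm_invariant n z2 (Suc k)" "\<forall>i<2^n. rt2_dvd (z2 i)"
    using make_rt2_divisible[OF assms(1) z1(3,4)] by blast
  define z' where "z' = (\<lambda>i. zw_div_rt2 (z2 i))"
  have "steps_to n (ps1 @ ps2) z (Suc k) z' k"
    using steps_to_append[OF z1(1) z2(1)] scaled_state_Suc[OF z2(4)] by (simp add: steps_to_def z'_def)
  moreover have "(\<Sum>i<2^n. g (z2 i)) = 2 * (\<Sum>i<2^n. g (z' i))"
    if "\<And>w. rt2_dvd w \<Longrightarrow> g w = 2 * g (zw_div_rt2 w)" for g :: "zomega \<Rightarrow> int"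
    unfolding sum_distrib_left z'_def using z2(4) that by (intro sum.cong) auto
  then have "norm_invariant n z' k"
    using z2(3) sqnorm_div_rt2 by (simp add: norm_invariant_def)
  ultimately show ?thesis using z1(2) z2(2)
    by (intro exI[of _ "ps1 @ ps2"] exI[of _ z']) simp
qed

lemma reduce_exponent:
  "n \<ge> 1 \<Longrightarrow> norm_invariant n z k \<Longrightarrow>
   \<exists>ps z'. steps_to n ps z k z' 0 \<and> length ps \<le> 4 * 2^n * k \<and> norm_invariant n z' 0"
proof (induction k arbitrary: z)
  case 0
  then show ?case by (intro exI[of _ "[]"] exI[of _ z]) (simp add: steps_to_Nil)
next
  case (Suc k)
  obtain ps1 z1 where "steps_to n ps1 z (Suc k) z1 k" "length ps1 \<le> 4 * 2^n" "norm_invariant n z1 k"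
    using reduce_exponent_step[OF Suc.prems] by blast
  moreover obtain ps2 z2 where "steps_to n ps2 z1 k z2 0" "length ps2 \<le> 4 * 2^n * k"
    "norm_invariant n z2 0"
    using Suc.IH[OF Suc.prems(1) calculation(3)] by blast
  ultimately show ?case by (intro exI[of _ "ps1 @ ps2"] exI[of _ z2]) (auto intro: steps_to_append)
qed

lemma sqrt2_not_rat: "sqrt 2 \<notin> \<rat>"
proof
  assume "sqrt 2 \<in> \<rat>"
  then obtain m n :: nat where n: "n \<noteq> 0" and sq: "\<bar>sqrt 2\<bar> = m / n" and cop: "coprime m n"
    by (rule Rats_abs_nat_div_natE)
  have "real m = sqrt 2 * n" using sq n by (simp add: field_simps)
  then have "real (m^2) = real (2 * n^2)" by (simp add: power_mult_distrib)
  then have eq: "m^2 = 2 * n^2" by (simp only: of_nat_eq_iff)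
  then have "even (m^2)" by simp
  then have "even m" by simp
  then obtain r where "m = 2 * r" by (rule evenE)
  with eq have "n^2 = 2 * r^2" by (simp add: power_mult_distrib)
  then have "even (n^2)" by simp
  then have "even n" by simp
  with \<open>even m\<close> cop have "is_unit (2::nat)" using coprime_common_divisor by blast
  then show False by simp
qed

lemma int_add_sqrt2_eq_int:
  fixes a b c :: int
  assumes "of_int a + sqrt 2 * of_int b = of_int c"
  shows "b = 0"
proof (rule ccontr)
  assume "b \<noteq> 0"
  then have "sqrt 2 = of_int (c - a) / of_int b" using assms by (simp add: field_simps)
  then show False using sqrt2_not_rat by (metis Rats_divide Rats_of_int)
qed

lemma coords_form_zval:
  assumes "coords_form n \<kappa> phi"
  obtains z where "\<forall>x<2^n. phi x = zval (z x) / rt2 ^ \<kappa>"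
proof -
  have "\<forall>x<2^n. \<exists>w. phi x = zval w / rt2 ^ \<kappa>"
  proof (intro allI impI)
    fix x :: nat
    assume "x < 2^n"
    then obtain a b c d :: int where "phi x = Complex (of_int a + of_int b * sqrt 2)
        (of_int c + of_int d * sqrt 2) / complex_of_real (sqrt 2 ^ \<kappa>)"
      using assms unfolding coords_form_def by blast
    moreover have "real_of_int (2 * e) / sqrt 2 = of_int e * sqrt 2" for e
      by (simp add: field_simps real_div_sqrt)
    ultimately show "\<exists>w. phi x = zval w / rt2 ^ \<kappa>"
      by (intro exI[of _ "Zw a (b + d) c (d - b)"]) (simp add: rt2_def)
  qed
  then show thesis using that by metis
qed

lemma unit_scaled_state_norm_invariant:
  assumes "unit_state n (scaled_state n z k)"
  shows "norm_invariant n z k"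
proof -
  have "(cmod (scaled_state n z k i))^2 = (of_int (sqnorm_int (z i)) + sqrt 2 * of_int (sqnorm_rt2 (z i))) / 2^k"
    if "i < 2^n" for i
  proof -
    have "(sqrt 2 ^ k)^2 = (2::real)^k" by (simp add: power2_eq_square flip: power_mult_distrib)
    then show ?thesis
      using that by (simp add: scaled_state_def rt2_def norm_divide norm_power power_divide norm_zval)
  qed
  then have "1 = (\<Sum>i<2^n. of_int (sqnorm_int (z i)) + sqrt 2 * of_int (sqnorm_rt2 (z i))) / (2::real)^k"
    using assms by (simp add: unit_state_def sum_divide_distrib)
  then have e: "of_int (\<Sum>i<2^n. sqnorm_int (z i)) + sqrt 2 * of_int (\<Sum>i<2^n. sqnorm_rt2 (z i))
      = of_int (2^k)"
    by (simp add: sum.distrib sum_distrib_left eq_divide_eq)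
  then have "(\<Sum>i<2^n. sqnorm_rt2 (z i)) = 0" by (rule int_add_sqrt2_eq_int)
  moreover from e this have "(\<Sum>i<2^n. sqnorm_int (z i)) = 2^k"
    by (simp only: of_int_0 mult_zero_right add_0_right of_int_eq_iff)
  ultimately show ?thesis by (simp add: norm_invariant_def)
qed

lemma norm_invariant_0_basis_state:
  assumes "norm_invariant n z 0"
  obtains x0 c where "x0 < 2^n" "cmod c = 1" "scaled_state n z 0 = (\<lambda>i. if i = x0 then c else 0)"
proof -
  have sums: "(\<Sum>i<2^n. sqnorm_int (z i)) = 1" "(\<Sum>i<2^n. sqnorm_rt2 (z i)) = 0"
    using assms by (auto simp: norm_invariant_def)
  then obtain x0 where x0: "x0 < 2^n" "sqnorm_int (z x0) \<noteq> 0"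
    by (metis (no_types, lifting) sum.neutral lessThan_iff zero_neq_one)
  have split: "(\<Sum>i<2^n. g i) = g x0 + (\<Sum>i\<in>{..<2^n} - {x0}. g i)" for g :: "nat \<Rightarrow> int"
    using x0 by (simp add: sum.remove)
  have "sqnorm_int (z x0) \<ge> 1" using x0 sqnorm_int_nonneg[of "z x0"] by linarith
  moreover have "(\<Sum>i\<in>{..<2^n} - {x0}. sqnorm_int (z i)) \<ge> 0" by (intro sum_nonneg) (simp add: sqnorm_int_nonneg)
  ultimately have rest: "(\<Sum>i\<in>{..<2^n} - {x0}. sqnorm_int (z i)) = 0" and "sqnorm_int (z x0) = 1"
    using split[of "\<lambda>i. sqnorm_int (z i)"] sums(1) by linarith+
  have zero: "z i = Zw 0 0 0 0" if "i < 2^n" "i \<noteq> x0" for i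
    using rest that by (subst (asm) sum_nonneg_eq_0_iff) (auto simp: sqnorm_int_nonneg intro: sqnorm_int_eq_0)
  then have "sqnorm_rt2 (z x0) = 0" using split[of "\<lambda>i. sqnorm_rt2 (z i)"] sums(2) by simp
  with \<open>sqnorm_int (z x0) = 1\<close> have "cmod (zval (z x0)) = 1"
    using norm_zval[of "z x0"] norm_ge_zero[of "zval (z x0)"] by (simp add: power2_eq_1_iff)
  moreover have "scaled_state n z 0 = (\<lambda>i. if i = x0 then zval (z x0) else 0)"
    using x0 zero by (auto simp: scaled_state_def fun_eq_iff complex_eq_iff)
  ultimately show thesis using that x0 by blast
qed

section \<open>Reflections from column reduction\<close>

lemma prims_op_linear:
  "prims_op ps (\<lambda>i. a * u i + b * v i) = (\<lambda>i. a * prims_op ps u i + b * prims_op ps v i)"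
proof (induction ps arbitrary: u v)
  case (Cons p ps)
  have "prim_op p (\<lambda>i. a * u i + b * v i) = (\<lambda>i. a * prim_op p u i + b * prim_op p v i)" for u v
    by (cases p) (auto simp: two_level_def fun_eq_iff algebra_simps)
  with Cons show ?case by simp
qed simp

definition unitary_qmat :: "qmat \<Rightarrow> bool" where
  "unitary_qmat M = (\<forall>c c'. cnj (M False c) * M False c' + cnj (M True c) * M True c' = (if c = c' then 1 else 0))"

lemma sum_lessThan_split2:
  fixes f :: "nat \<Rightarrow> 'a::comm_monoid_add"
  assumes "x < N" "y < N" "x \<noteq> y"
  shows "(\<Sum>i<N. f i) = f x + f y + (\<Sum>i\<in>{..<N} - {x, y}. f i)"
proof -
  have "(\<Sum>i<N. f i) = f x + (\<Sum>i\<in>{..<N} - {x}. f i)" using assms by (simp add: sum.remove)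
  also have "(\<Sum>i\<in>{..<N} - {x}. f i) = f y + (\<Sum>i\<in>{..<N} - {x} - {y}. f i)"
    using assms by (intro sum.remove) auto
  finally show ?thesis by (simp add: add.assoc insert_commute flip: Diff_insert2)
qed

lemma inner_two_level:
  assumes "unitary_qmat M" "x < 2^n" "y < 2^n" "x \<noteq> y"
  shows "inner n (two_level M x y u) (two_level M x y v) = inner n u v"
proof -
  have "cnj (two_level M x y u x) * two_level M x y v x + cnj (two_level M x y u y) * two_level M x y v y =
      cnj (u x) * v x * (cnj (M False False) * M False False + cnj (M True False) * M True False)
      + cnj (u y) * v y * (cnj (M False True) * M False True + cnj (M True True) * M True True)
      + cnj (u x) * v y * (cnj (M False False) * M False True + cnj (M True False) * M True True)
      + cnj (u y) * v x * (cnj (M False True) * M False False + cnj (M True True) * M True False)"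
    using assms by (simp add: two_level_def algebra_simps)
  also have "\<dots> = cnj (u x) * v x + cnj (u y) * v y"
    using assms(1) unfolding unitary_qmat_def by simp
  finally show ?thesis
    unfolding inner_def sum_lessThan_split2[OF assms(2-4)] by (simp add: two_level_def)
qed

lemma cnj_mult_self_eq_1: "cmod c = 1 \<Longrightarrow> cnj c * c = 1"
  by (metis complex_norm_square mult.commute of_real_1 one_power2)

lemma kind_mat_unitary: "unitary_qmat (kind_mat k)"
proof -
  have "cnj \<omega> * \<omega> = 1" by (simp add: cnj_mult_self_eq_1 \<omega>_def)
  moreover from this have "cnj (\<omega>^7) * \<omega>^7 = 1"
    by (metis complex_cnj_power power_mult_distrib power_one)
  moreover have "cnj (1 / rt2) * (1 / rt2) = 1 / 2"
    using rt2_mult_rt2 by (simp add: rt2_def field_simps)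
  ultimately show ?thesis
    by (cases k) (auto simp: unitary_qmat_def qdiag_def hadamard_eq rt2_mult_rt2 field_simps)
qed

lemma inner_prims_op:
  "\<forall>p\<in>set ps. prim_ok n p \<Longrightarrow> inner n (prims_op ps u) (prims_op ps v) = inner n u v"
proof (induction ps arbitrary: u v)
  case (Cons p ps)
  have "inner n (prim_op p u) (prim_op p v) = inner n u v" for u v
  proof (cases p)
    case (Ph y)
    with Cons.prems have "n = 1" "y < 2" by auto
    moreover have "cnj \<omega> * \<omega> = 1" by (simp add: cnj_mult_self_eq_1 \<omega>_def)
    ultimately show ?thesis using Ph
      by (simp add: inner_def lessThan_nat_numeral)
  qed (use Cons.prems inner_two_level[OF kind_mat_unitary] in auto)
  with Cons show ?case by simp
qed simp

fun prim_inverse :: "prim \<Rightarrow> prim list" where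
  "prim_inverse (TL KH x y) = [TL KH x y]"
| "prim_inverse (TL KD x y) = [TL KDi x y]"
| "prim_inverse (TL KDi x y) = [TL KD x y]"
| "prim_inverse (TL KZ x y) = [TL KZ x y]"
| "prim_inverse (Ph y) = replicate 7 (Ph y)"

definition prims_inverse :: "prim list \<Rightarrow> prim list" where
  "prims_inverse ps = concat (map prim_inverse (rev ps))"

lemma two_level_two_level: "x \<noteq> y \<Longrightarrow> two_level N x y (two_level M x y v) = two_level (qmult N M) x y v"
  by (auto simp: two_level_def qmult_def fun_eq_iff algebra_simps)

lemma two_level_qI: "two_level qI x y v = v"
  by (auto simp: two_level_def qI_def fun_eq_iff)

lemma prims_op_prim_inverse: "prim_ok n p \<Longrightarrow> prims_op (prim_inverse p) (prim_op p v) = v"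
proof (cases p)
  case (TL k x y)
  moreover assume "prim_ok n p"
  ultimately show ?thesis
    by (cases k) (simp_all add: two_level_two_level two_level_qI hadamard_squared omega_mult_pow7
        flip: qI_eq_qdiag)
next
  case (Ph y)
  have "prims_op (replicate m (Ph y)) u = (\<lambda>i. if i = y then \<omega>^m * u i else u i)" for m u
    by (induction m arbitrary: u) (auto simp: fun_eq_iff algebra_simps)
  then show ?thesis using Ph by (auto simp: fun_eq_iff mult.assoc[symmetric] omega_mult_pow7)
qed

lemma prims_op_prims_inverse:
  "\<forall>p\<in>set ps. prim_ok n p \<Longrightarrow> prims_op (prims_inverse ps) (prims_op ps v) = v"
  by (induction ps arbitrary: v) (auto simp: prims_inverse_def prims_op_prim_inverse)

lemma prims_inverse_ok: "\<forall>p\<in>set ps. prim_ok n p \<Longrightarrow> \<forall>q\<in>set (prims_inverse ps). prim_ok n q"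
proof -
  have "prim_ok n p \<Longrightarrow> \<forall>q\<in>set (prim_inverse p). prim_ok n q" for p
    by (cases p rule: prim_inverse.cases) auto
  then show "\<forall>p\<in>set ps. prim_ok n p \<Longrightarrow> ?thesis" by (fastforce simp: prims_inverse_def)
qed

lemma length_prims_inverse: "length (prims_inverse ps) \<le> 7 * length ps"
proof (induction ps)
  case (Cons p ps)
  have "length (prim_inverse p) \<le> 7" by (cases p rule: prim_inverse.cases) auto
  with Cons show ?case by (simp add: prims_inverse_def)
qed (simp add: prims_inverse_def)

text \<open>If \<open>W\<close> maps \<open>\<phi>\<close> to \<open>c e\<^sub>x\<^sub>0\<close>, then \<open>R\<^sub>\<phi> = W\<^sup>-\<^sup>1 (I - 2 e\<^sub>x\<^sub>0 e\<^sub>x\<^sub>0\<^sup>*) W\<close>, and the middle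
  reflection is the two-level \<open>Z\<close> on any pair containing \<open>x0\<close>.\<close>
lemma prims_op_reflection:
  assumes ok: "\<forall>p\<in>set ps. prim_ok n p" and x: "x0 < 2^n" "x1 < 2^n" "x1 \<noteq> x0"
    and c: "cmod c = 1" and W: "prims_op ps phi = (\<lambda>i. if i = x0 then c else 0)"
  shows "prims_op (ps @ [TL KZ x1 x0] @ prims_inverse ps) v = reflection n phi v"
proof -
  define e where "e = (\<lambda>i. if i = x0 then (1::complex) else 0)"
  let ?W = "prims_op ps" and ?V = "prims_op (prims_inverse ps)"
  have VW: "?V (?W u) = u" for u by (rule prims_op_prims_inverse[OF ok])
  have Ve: "?V e = (\<lambda>i. phi i / c)"
  proof -
    have "?V (\<lambda>i. c * e i) = (\<lambda>i. c * ?V e i)"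
      using prims_op_linear[of "prims_inverse ps" c e 0 e] by simp
    moreover have "(\<lambda>i. c * e i) = ?W phi" using W by (auto simp: e_def fun_eq_iff)
    ultimately have "phi = (\<lambda>i. c * ?V e i)" using VW by simp
    moreover have "c \<noteq> 0" using c by auto
    ultimately show ?thesis by (simp add: fun_eq_iff)
  qed
  have "(\<Sum>y<2^n. cnj (if y = x0 then c else 0) * ?W v y)
      = (\<Sum>y<2^n. if y = x0 then cnj c * ?W v x0 else 0)"
    by (intro sum.cong) auto
  then have "cnj c * ?W v x0 = inner n phi v"
    using inner_prims_op[OF ok, of phi v] x(1) unfolding W inner_def by simp
  then have Wx0: "?W v x0 = inner n phi v * c" using cnj_mult_self_eq_1[OF c]
    by (metis mult.assoc mult.commute mult_1)
  have Z: "prim_op (TL KZ x1 x0) u = (\<lambda>i. 1 * u i + (- 2 * u x0) * e i)" for u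
    using x by (auto simp: two_level_def qdiag_def e_def fun_eq_iff)
  have "prims_op (ps @ [TL KZ x1 x0] @ prims_inverse ps) v = ?V (prim_op (TL KZ x1 x0) (?W v))"
    by simp
  also have "\<dots> = (\<lambda>i. 1 * v i + (- 2 * ?W v x0) * ?V e i)"
    unfolding Z prims_op_linear VW ..
  also have "\<dots> = reflection n phi v"
    using c by (auto simp: Ve Wx0 reflection_def fun_eq_iff)
  finally show ?thesis .
qed

section \<open>Circuits and gate counts\<close>

lemma circuit_on_simps [simp]:
  "circuit_on m []" "circuit_on m (g # gs) = (gate_ok m g \<and> circuit_on m gs)"
  "circuit_on m (gs @ hs) = (circuit_on m gs \<and> circuit_on m hs)"
  "circuit_on m (replicate k g) = (k = 0 \<or> gate_ok m g)"
  "circuit_on m (concat (map f xs)) = (\<forall>x\<in>set xs. circuit_on m (f x))"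
  "circuit_on m (map h xs) = (\<forall>x\<in>set xs. gate_ok m (h x))"
  by (auto simp: circuit_on_def)

lemma length_toffoli: "length (toffoli a b t) = 37"
  by (simp add: toffoli_def ccz_circ_def cnot_conj_def)

lemma toffoli_ok:
  "a < m \<Longrightarrow> b < m \<Longrightarrow> t < m \<Longrightarrow> distinct [a, b, t] \<Longrightarrow> circuit_on m (toffoli a b t)"
  by (auto simp: toffoli_def ccz_circ_def cnot_conj_def)

lemma length_toffoli_chain: "length (toffoli_chain cs es) \<le> 74 * length es"
  by (induction cs es rule: toffoli_chain.induct) (auto simp: length_toffoli)

lemma toffoli_chain_ok:
  "distinct (cs @ es) \<Longrightarrow> \<forall>q\<in>set (cs @ es). q < m \<Longrightarrow> circuit_on m (toffoli_chain cs es)"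
  by (induction cs es rule: toffoli_chain.induct) (auto intro!: toffoli_ok)

lemma length_mcx_borrowing: "length (mcx_borrowing cs t ds) \<le> 148 * (length cs + 1)"
  using length_toffoli_chain[of cs "t # take (length cs - 2) ds"]
    length_toffoli_chain[of "tl cs" "take (length cs - 2) ds"]
  by (simp add: mcx_borrowing_def)

lemma mcx_borrowing_ok:
  assumes "distinct (t # cs @ ds)" "\<forall>q\<in>set (t # cs @ ds). q < m"
  shows "circuit_on m (mcx_borrowing cs t ds)"
proof -
  have d: "distinct (cs @ t # take (length cs - 2) ds)"
    using assms(1) set_take_subset[of "length cs - 2" ds] distinct_take[of ds] by auto
  moreover have "distinct (tl cs @ take (length cs - 2) ds)" using d by (cases cs) auto
  moreover have "\<forall>q\<in>set (take (length cs - 2) ds) \<union> set (tl cs). q < m"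
    using assms(2) set_take_subset[of "length cs - 2" ds] list.set_sel(2)[of cs] by (cases cs) auto
  ultimately show ?thesis
    using assms(2) by (auto simp: mcx_borrowing_def intro!: toffoli_chain_ok)
qed

lemma length_mcx: "length (mcx C a d) \<le> 600 * (length C + 1)"
proof (cases C rule: mcx_cases)
  case 3
  then show ?thesis using length_mcx_borrowing[of C a "[d]"] by (auto simp: mcx_def)
next
  case 4
  define k where "k = (length C + 1) div 2"
  have "C \<noteq> []" using 4 by auto
  with 4 have "length (mcx C a d) = 2 * length (mcx_borrowing (take k C) d (drop k C @ [a]))
      + 2 * length (mcx_borrowing (d # drop k C) a (take k C))"
    by (simp add: mcx_def Let_def k_def)
  also have "\<dots> \<le> 2 * (148 * (length (take k C) + 1)) + 2 * (148 * (length (d # drop k C) + 1))"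
    by (intro add_mono mult_le_mono2 length_mcx_borrowing)
  also have "\<dots> \<le> 600 * (length C + 1)" using 4 by simp
  finally show ?thesis .
qed (auto simp: mcx_def not_circ_def)

lemma mcx_ok:
  assumes "distinct (a # d # C)" "\<forall>q\<in>set (a # d # C). q < m"
  shows "circuit_on m (mcx C a d)"
proof (cases C rule: mcx_cases)
  case 2
  then obtain c where "C = [c]" by (cases C) auto
  then show ?thesis using assms by (auto simp: mcx_def)
next
  case 4
  define k where "k = (length C + 1) div 2"
  have "set (take k C) \<inter> set (drop k C) = {}"
    using assms(1) by (intro set_take_disj_set_drop_if_distinct) auto
  moreover have "set (take k C) \<subseteq> set C" "set (drop k C) \<subseteq> set C"
    by (rule set_take_subset set_drop_subset)+
  moreover from this have "\<forall>q\<in>set (take k C) \<union> set (drop k C). q < m" using assms(2) by auto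
  ultimately have "circuit_on m (mcx_borrowing (take k C) d (drop k C @ [a]))"
    "circuit_on m (mcx_borrowing (d # drop k C) a (take k C))"
    using assms by (auto intro!: mcx_borrowing_ok)
  moreover have "C \<noteq> []" using 4 by auto
  ultimately show ?thesis using 4 by (simp add: mcx_def Let_def k_def)
qed (use assms in \<open>auto simp: mcx_def not_circ_def intro!: mcx_borrowing_ok\<close>)

lemma length_ctrl_kind_circ: "length (ctrl_kind_circ b k a j) \<le> 23"
proof -
  have "length (kind_ctrl_circ k a j) \<le> 15"
    by (cases k) (simp_all add: ctrl_H_def ctrl_D_def ctrl_D_inv_def ctrl_Z_def)
  then show ?thesis by (simp add: ctrl_kind_circ_def not_circ_def)
qed

lemma ctrl_kind_circ_ok: "a < m \<Longrightarrow> j < m \<Longrightarrow> a \<noteq> j \<Longrightarrow> circuit_on m (ctrl_kind_circ b k a j)"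
  by (cases k) (auto simp: ctrl_kind_circ_def not_circ_def ctrl_H_def ctrl_D_def ctrl_D_inv_def ctrl_Z_def)

lemma length_two_level_circ: "n \<ge> 1 \<Longrightarrow> length (two_level_circ n k x y) \<le> 2500 * n"
proof -
  assume "n \<ge> 1"
  define j where "j = diff_bit x y"
  define lo where "lo = (if bit x j then y else x)"
  define D where "D = filter (\<lambda>q. q \<noteq> j \<and> bit x q \<noteq> bit y q) [0..<n]"
  define E where "E = filter (\<lambda>q. q \<noteq> j \<and> \<not> bit lo q) [0..<n]"
  define C where "C = filter (\<lambda>q. q \<noteq> j) [0..<n]"
  have lengths: "length D \<le> n" "length E \<le> n" "length C \<le> n"
    unfolding D_def E_def C_def by (metis length_filter_le length_upt minus_nat.diff_0)+
  have "length (concat (map not_circ E)) = 4 * length E"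
    by (induction E) (auto simp: not_circ_def)
  moreover have "length (two_level_circ n k x y) = 2 * length D + 2 * length (concat (map not_circ E))
      + 2 * length (mcx C n j) + length (ctrl_kind_circ (bit x j) k n j)"
    by (simp add: two_level_circ_def Let_def j_def lo_def D_def E_def C_def)
  ultimately have "length (two_level_circ n k x y)
      \<le> 2 * length D + 2 * (4 * length E) + 2 * (600 * (length C + 1)) + 23"
    using length_mcx[of C n j] length_ctrl_kind_circ[of "bit x j" k n j] by linarith
  also have "\<dots> \<le> 2500 * n" using lengths \<open>n \<ge> 1\<close> by simp
  finally show ?thesis .
qed

lemma (in two_level_pair) circuit_ok: "circuit_on (n + 1) (two_level_circ n k x y)"
  using j_less distinct_qubits
  by (auto simp: circ_eq diff_qubits_def zero_qubits_def not_circ_def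
      intro!: mcx_ok ctrl_kind_circ_ok) (auto simp: ctrl_qubits_def)

fun prim_circ :: "nat \<Rightarrow> prim \<Rightarrow> gate list" where
  "prim_circ n (TL k x y) = two_level_circ n k x y"
| "prim_circ n (Ph y) = (if y = 1 then [Tg 0] else not_circ 0 @ [Tg 0] @ not_circ 0)"

lemma length_prim_circ: "n \<ge> 1 \<Longrightarrow> length (prim_circ n p) \<le> 2500 * n"
  by (cases p) (auto simp: length_two_level_circ not_circ_def)

lemma prim_circ_ok: "prim_ok n p \<Longrightarrow> circuit_on (n + 1) (prim_circ n p)"
proof (cases p)
  case (TL k x y)
  moreover assume "prim_ok n p"
  ultimately show ?thesis using two_level_pair.circuit_ok[OF two_level_pair.intro] by simp
qed (auto simp: not_circ_def)

lemma run_prim_circ: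
  assumes "prim_ok n p"
  shows "run (prim_circ n p) (with_ancilla n v) = with_ancilla n (prim_op p v)"
proof (cases p)
  case (TL k x y)
  then show ?thesis using assms two_level_pair.run_two_level_circ[OF two_level_pair.intro] by simp
next
  case (Ph y)
  with assms have y: "n = 1" "y < 2" by auto
  have "run (prim_circ n p) u = (\<lambda>i. (if bit i 0 = (y = 1) then \<omega> else 1) * u i)" for u
  proof (cases "y = 1")
    case True
    then have "prim_circ n p = [Tg 0]" using Ph by simp
    then show ?thesis using True by (simp only: run_T) (simp add: diag_op_def fun_eq_iff)
  next
    case False
    then have "run (prim_circ n p) u = run (not_circ 0) (run [Tg 0] (run (not_circ 0) u))"
      using Ph by simp
    also have "\<dots> = (\<lambda>i. (if bit i 0 = (y = 1) then \<omega> else 1) * u i)"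
      using False by (simp only: run_not_circ run_T) (simp add: diag_op_def fun_eq_iff)
    finally show ?thesis .
  qed
  moreover have "bit i 0 = (i = 1)" if "i < 2" for i :: nat
    using that by (auto simp: bit_0 less_2_cases_iff)
  ultimately show ?thesis using Ph y by (auto simp: with_ancilla_def fun_eq_iff)
qed

lemma prims_circ:
  assumes "n \<ge> 1" "\<forall>p\<in>set ps. prim_ok n p"
  shows "implements_with_ancilla n (concat (map (prim_circ n) ps)) (prims_op ps)"
    and "length (concat (map (prim_circ n) ps)) \<le> 2500 * n * length ps"
proof -
  have "run (concat (map (prim_circ n) ps)) (with_ancilla n v) = with_ancilla n (prims_op ps v)" for v
    using assms(2) by (induction ps arbitrary: v) (auto simp: run_prim_circ)
  moreover have "circuit_on (n + 1) (concat (map (prim_circ n) ps))"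
    using assms(2) prim_circ_ok by (simp only: circuit_on_simps) blast
  ultimately show "implements_with_ancilla n (concat (map (prim_circ n) ps)) (prims_op ps)"
    by (simp add: implements_with_ancilla_def)
  show "length (concat (map (prim_circ n) ps)) \<le> 2500 * n * length ps"
    using length_prim_circ[OF assms(1)] by (induction ps) (auto simp: add_mono)
qed

lemma implements_with_ancilla_cong:
  assumes "implements_with_ancilla n gs U" "\<And>v x. x < 2^n \<Longrightarrow> U v x = U' v x"
  shows "implements_with_ancilla n gs U'"
  using assms by (simp add: implements_with_ancilla_def with_ancilla_def)

lemma reflection_circuit:
  assumes n: "1 \<le> n" and \<kappa>: "1 \<le> \<kappa>" and unit: "unit_state n phi" and coords: "coords_form n \<kappa> phi"
  shows "\<exists>gs. implements_with_ancilla n gs (reflection n phi) \<and> length gs \<le> 82500 * 2^n * n * \<kappa>"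
proof -
  obtain z where "\<forall>x<2^n. phi x = zval (z x) / rt2 ^ \<kappa>" using coords_form_zval[OF coords] .
  then have phi: "\<forall>i<2^n. scaled_state n z \<kappa> i = phi i" by (simp add: scaled_state_def)
  then have "norm_invariant n z \<kappa>"
    using unit by (intro unit_scaled_state_norm_invariant) (simp add: unit_state_def)
  then obtain ps z' where ps: "steps_to n ps z \<kappa> z' 0" "length ps \<le> 4 * 2^n * \<kappa>"
    and z': "norm_invariant n z' 0"
    using reduce_exponent[OF n] by blast
  obtain x0 c where x0: "x0 < 2^n" "cmod c = 1" "scaled_state n z' 0 = (\<lambda>i. if i = x0 then c else 0)"
    using norm_invariant_0_basis_state[OF z'] .
  define x1 where "x1 = (if x0 = 0 then 1 else (0::nat))"
  have "(2::nat) \<le> 2^n" using n power_increasing[of 1 n "2::nat"] by simp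
  then have x1: "x1 < 2^n" "x1 \<noteq> x0" by (auto simp: x1_def)
  define all where "all = ps @ [TL KZ x1 x0] @ prims_inverse ps"
  have ok: "\<forall>p\<in>set all. prim_ok n p"
    using ps(1) prims_inverse_ok[of ps n] x0(1) x1 by (auto simp: all_def steps_to_def)
  have "prims_op all = reflection n (scaled_state n z \<kappa>)"
    using prims_op_reflection[OF _ x0(1) x1 x0(2)] ps(1) x0(3) by (auto simp: all_def steps_to_def)
  moreover have "inner n (scaled_state n z \<kappa>) v = inner n phi v" for v
    using phi by (simp add: inner_def)
  ultimately have "implements_with_ancilla n (concat (map (prim_circ n) all)) (reflection n phi)"
    using prims_circ(1)[OF n ok] phi
    by (elim implements_with_ancilla_cong) (simp add: reflection_def)
  moreover have "length (concat (map (prim_circ n) all)) \<le> 82500 * 2^n * n * \<kappa>"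
  proof -
    have "1 \<le> 2^n * \<kappa>" "length ps \<le> 4 * (2^n * \<kappa>)" using \<kappa> ps(2) by (simp_all add: mult.assoc)
    moreover have "length all = Suc (length ps + length (prims_inverse ps))" by (simp add: all_def)
    ultimately have "length all \<le> 33 * (2^n * \<kappa>)" using length_prims_inverse[of ps] by linarith
    then have "2500 * n * length all \<le> 2500 * n * (33 * (2^n * \<kappa>))" by (rule mult_le_mono2)
    also have "\<dots> = 82500 * 2^n * n * \<kappa>" by simp
    finally show ?thesis using prims_circ(2)[OF n ok] by linarith
  qed
  ultimately show ?thesis by blast
qed

theorem lemma4:
  "\<exists>C::real. \<forall>n \<kappa> (phi :: nat \<Rightarrow> complex).
      1 \<le> n \<longrightarrow> 1 \<le> \<kappa> \<longrightarrow> unit_state n phi \<longrightarrow> coords_form n \<kappa> phi \<longrightarrow>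
      (\<exists>gs. implements_with_ancilla n gs (reflection n phi) \<and>
            real (length gs) \<le> C * 2^n * real n * real \<kappa>)"
proof (intro exI[of _ 82500] allI impI)
  fix n \<kappa> :: nat and phi :: "nat \<Rightarrow> complex"
  assume "1 \<le> n" "1 \<le> \<kappa>" "unit_state n phi" "coords_form n \<kappa> phi"
  then obtain gs where "implements_with_ancilla n gs (reflection n phi)" "length gs \<le> 82500 * 2^n * n * \<kappa>"
    using reflection_circuit by blast
  then show "\<exists>gs. implements_with_ancilla n gs (reflection n phi) \<and>
      real (length gs) \<le> 82500 * 2^n * real n * real \<kappa>"
    by (metis (mono_tags) of_nat_le_iff of_nat_mult of_nat_numeral of_nat_power)
qed

end
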